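(* Let $F$ be a field with $\operatorname{char}F\ne2$, let $a,b\in F$ with $E=F(\sqrt a,\sqrt b)$ satisfying $[E:F]=4$. Suppose there exist (in a fixed algebraic closure of $F$) a Galois extension $D^{a,b}$ of $F$ with $E\subseteq D^{a,b}$, $\operatorname{Gal}(D^{a,b}/F)\cong D$ and $\operatorname{Gal}(D^{a,b}/F(\sqrt{ab}))\cong C$, and a cyclic quartic extension $C^a$ of $F$ with $F(\sqrt a)\subseteq C^a$. Let $K$ be the composite $D^{a,b}C^a$. Then $K/F$ is Galois and $\operatorname{Gal}(K/F)\cong D\curlywedge C$.
   Context: $D$ is the dihedral group of order 8, $C$ the cyclic group of order 4. $D\curlywedge C$ is the pullback of a homomorphism $\lambda:D\to\mathbb Z/2\mathbb Z$ with kernel isomorphic to $\mathbb Z/2\times\mathbb Z/2$ and the nontrivial homomorphism $\eta:C\to\mathbb Z/2\mathbb Z$: $D\curlywedge C=\{(u,v)\in D\times C:\lambda(u)=\eta(v)\}$, of order 16. *)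

theory Defs
  imports "HOL-Algebra.Elementary_Groups" "HOL-Computational_Algebra.Polynomial"
begin

definition is_subfield :: "'a::field set \<Rightarrow> bool" where
  "is_subfield K \<longleftrightarrow> 0 \<in> K \<and> 1 \<in> K \<and>
     (\<forall>x\<in>K. \<forall>y\<in>K. x + y \<in> K \<and> x * y \<in> K) \<and>
     (\<forall>x\<in>K. - x \<in> K) \<and> (\<forall>x\<in>K. x \<noteq> 0 \<longrightarrow> inverse x \<in> K)"

text \<open>Smallest subfield containing F and S, i.e. F(S); composita are adjoin K L.\<close>
definition adjoin :: "'a::field set \<Rightarrow> 'a set \<Rightarrow> 'a set" where
  "adjoin F S = \<Inter> {L. is_subfield L \<and> F \<union> S \<subseteq> L}"

definition algebraic_over :: "'a::field set \<Rightarrow> 'a \<Rightarrow> bool" where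
  "algebraic_over F x \<longleftrightarrow> (\<exists>p. p \<noteq> 0 \<and> (\<forall>i. coeff p i \<in> F) \<and> poly p x = 0)"

definition ext_degree :: "'a::field set \<Rightarrow> 'a set \<Rightarrow> nat \<Rightarrow> bool" where
  "ext_degree F E n \<longleftrightarrow> (\<exists>B. finite B \<and> card B = n \<and> B \<subseteq> E \<and>
     (\<forall>c. (\<forall>x\<in>B. c x \<in> F) \<and> (\<Sum>x\<in>B. c x * x) = 0 \<longrightarrow> (\<forall>x\<in>B. c x = 0)) \<and>
     (\<forall>y\<in>E. \<exists>c. (\<forall>x\<in>B. c x \<in> F) \<and> y = (\<Sum>x\<in>B. c x * x)))"

definition gal_group :: "'a::field set \<Rightarrow> 'a set \<Rightarrow> ('a \<Rightarrow> 'a) monoid" where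
  "gal_group K F = \<lparr>carrier = {\<sigma>. bij_betw \<sigma> K K \<and>
        (\<forall>x\<in>K. \<forall>y\<in>K. \<sigma> (x + y) = \<sigma> x + \<sigma> y \<and> \<sigma> (x * y) = \<sigma> x * \<sigma> y) \<and>
        (\<forall>x\<in>F. \<sigma> x = x) \<and> (\<forall>x. x \<notin> K \<longrightarrow> \<sigma> x = x)},
     monoid.mult = (\<lambda>\<sigma> \<tau>. \<sigma> \<circ> \<tau>), one = id\<rparr>"

definition fixed_field :: "'a::field set \<Rightarrow> 'a set \<Rightarrow> 'a set" where
  "fixed_field K F = {x\<in>K. \<forall>\<sigma>\<in>carrier (gal_group K F). \<sigma> x = x}"

definition galois :: "'a::field set \<Rightarrow> 'a set \<Rightarrow> bool" where
  "galois F K \<longleftrightarrow> is_subfield F \<and> is_subfield K \<and> F \<subseteq> K \<and>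
     (\<exists>n. ext_degree F K n) \<and> fixed_field K F = F"

text \<open>Dihedral group of order 8: pairs (i,s), i mod 4 rotation, s mod 2 reflection,
  (i,s)(j,t) = (i + (-1)^s j, s + t).\<close>
definition dihedral8 :: "(int \<times> int) monoid" where
  "dihedral8 = \<lparr>carrier = {0..<4} \<times> {0..<2},
     monoid.mult = (\<lambda>(i,s) (j,t). ((i + (if s = 0 then j else - j)) mod 4, (s + t) mod 2)),
     one = (0, 0)\<rparr>"

abbreviation cyclic4 :: "int monoid" where
  "cyclic4 \<equiv> integer_mod_group 4"

text \<open>\<lambda> : D \<rightarrow> Z/2 with kernel {(0,0),(2,0),(0,1),(2,1)} \<cong> Z/2 \<times> Z/2,
  \<eta> : C \<rightarrow> Z/2 the nontrivial homomorphism (values in {0,1} = Z/2).\<close>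
definition lambdaD :: "int \<times> int \<Rightarrow> int" where
  "lambdaD u = fst u mod 2"

definition etaC :: "int \<Rightarrow> int" where
  "etaC v = v mod 2"

definition pullback :: "('a, 'c) monoid_scheme \<Rightarrow> ('b, 'd) monoid_scheme \<Rightarrow>
    ('a \<Rightarrow> 'e) \<Rightarrow> ('b \<Rightarrow> 'e) \<Rightarrow> ('a \<times> 'b) monoid" where
  "pullback G H l e = \<lparr>carrier = {(u, v). u \<in> carrier G \<and> v \<in> carrier H \<and> l u = e v},
     monoid.mult = (\<lambda>(u, v) (u', v'). (u \<otimes>\<^bsub>G\<^esub> u', v \<otimes>\<^bsub>H\<^esub> v')),
     one = (\<one>\<^bsub>G\<^esub>, \<one>\<^bsub>H\<^esub>)\<rparr>"

abbreviation DwedgeC :: "((int \<times> int) \<times> int) monoid" where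
  "DwedgeC \<equiv> pullback dihedral8 cyclic4 lambdaD etaC"

end

theory Submission
  imports Defs
begin

text \<open>Put \<open>K = D C\<close>. Let \<open>\<rho>\<close> be the element of order two of \<open>Gal(C/F) \<cong> C\<close>; its fixed
  field is \<open>F(\<alpha>)\<close>, and \<open>C = F(\<alpha>)(\<gamma>)\<close> for some \<open>\<gamma>\<close> with \<open>\<rho> \<gamma> = -\<gamma>\<close>. Every homomorphism
  \<open>D \<rightarrow> C\<close> lands in the subgroup of order two, so \<open>C \<not>\<subseteq> D\<close>, \<open>\<gamma> \<notin> D\<close>, \<open>K = D(\<gamma>)\<close> and
  \<open>[K:F] = 2 [D:F]\<close>. As \<open>D/F\<close> and \<open>C/F\<close> are Galois, automorphisms of \<open>K\<close> restrict to both;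
  conversely \<open>s \<in> Gal(D/F)\<close> and \<open>t \<in> Gal(C/F)\<close> acting alike on \<open>\<alpha>\<close> agree on \<open>F(\<alpha>)\<close> and glue
  to a unique automorphism of \<open>K\<close>. Hence \<open>K/F\<close> is Galois and restriction identifies
  \<open>Gal(K/F)\<close> with the pairs \<open>(s, t)\<close> acting alike on \<open>\<alpha>\<close>. Finally the isomorphisms with
  \<open>D\<close> and \<open>C\<close> can be chosen so that \<open>\<lambda>\<close> and \<open>\<eta>\<close> both record the action on \<open>\<alpha>\<close>: for \<open>C\<close>
  this is automatic, for \<open>D\<close> it holds up to an automorphism of \<open>D\<close>, because a generator of
  \<open>Gal(D/F(\<alpha>\<beta>)) \<cong> C\<close> is a rotation of order four fixing \<open>\<alpha>\<beta>\<close>.\<close>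

section \<open>Subfields and field homomorphisms\<close>

lemma subfield_zero: "is_subfield K \<Longrightarrow> 0 \<in> K"
  and subfield_one: "is_subfield K \<Longrightarrow> 1 \<in> K"
  and subfield_add: "is_subfield K \<Longrightarrow> x \<in> K \<Longrightarrow> y \<in> K \<Longrightarrow> x + y \<in> K"
  and subfield_mult: "is_subfield K \<Longrightarrow> x \<in> K \<Longrightarrow> y \<in> K \<Longrightarrow> x * y \<in> K"
  and subfield_uminus: "is_subfield K \<Longrightarrow> x \<in> K \<Longrightarrow> - x \<in> K"
  by (simp_all add: is_subfield_def)

lemma subfield_inverse: "is_subfield K \<Longrightarrow> x \<in> K \<Longrightarrow> inverse x \<in> K"
  by (cases "x = 0") (auto simp add: is_subfield_def)

lemma subfield_diff: "is_subfield K \<Longrightarrow> x \<in> K \<Longrightarrow> y \<in> K \<Longrightarrow> x - y \<in> K"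
  by (metis diff_conv_add_uminus subfield_add subfield_uminus)

lemma subfield_divide: "is_subfield K \<Longrightarrow> x \<in> K \<Longrightarrow> y \<in> K \<Longrightarrow> x / y \<in> K"
  by (metis divide_inverse subfield_inverse subfield_mult)

lemma subfield_power: "is_subfield K \<Longrightarrow> x \<in> K \<Longrightarrow> x ^ n \<in> K"
  by (induction n) (auto intro: subfield_one subfield_mult)

lemma subfield_two: "is_subfield K \<Longrightarrow> 2 \<in> K"
  by (metis one_add_one subfield_add subfield_one)

lemma subfield_sum: "is_subfield K \<Longrightarrow> (\<And>x. x \<in> A \<Longrightarrow> f x \<in> K) \<Longrightarrow> sum f A \<in> K"
  by (induction A rule: infinite_finite_induct) (auto intro: subfield_zero subfield_add)

lemmas subfield_closed = subfield_zero subfield_one subfield_add subfield_mult subfield_uminus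
  subfield_inverse subfield_diff subfield_divide subfield_power subfield_two

lemma adjoin_subfield: "is_subfield (adjoin F S)"
  unfolding adjoin_def is_subfield_def by auto

lemma adjoin_upper: "F \<union> S \<subseteq> adjoin F S"
  unfolding adjoin_def by auto

lemma adjoin_least: "is_subfield L \<Longrightarrow> F \<union> S \<subseteq> L \<Longrightarrow> adjoin F S \<subseteq> L"
  unfolding adjoin_def by auto

definition field_hom_on :: "'a::field set \<Rightarrow> ('a \<Rightarrow> 'a) \<Rightarrow> bool" where
  "field_hom_on K s \<longleftrightarrow> (\<forall>x\<in>K. \<forall>y\<in>K. s (x + y) = s x + s y \<and> s (x * y) = s x * s y)"

lemma field_hom_on_add: "field_hom_on K s \<Longrightarrow> x \<in> K \<Longrightarrow> y \<in> K \<Longrightarrow> s (x + y) = s x + s y"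
  and field_hom_on_mult: "field_hom_on K s \<Longrightarrow> x \<in> K \<Longrightarrow> y \<in> K \<Longrightarrow> s (x * y) = s x * s y"
  by (simp_all add: field_hom_on_def)

context
  fixes K :: "'a::field set" and s :: "'a \<Rightarrow> 'a"
  assumes K: "is_subfield K" and s: "field_hom_on K s"
begin

lemma field_hom_on_zero: "s 0 = 0"
proof -
  have "s 0 = s 0 + s 0" using field_hom_on_add[OF s, of 0 0] K by (simp add: subfield_zero)
  then show ?thesis by (metis add_cancel_right_right)
qed

lemma field_hom_on_uminus: "x \<in> K \<Longrightarrow> s (- x) = - s x"
  using field_hom_on_add[OF s, of x "- x"] K by (simp add: field_hom_on_zero subfield_uminus add_eq_0_iff)

lemma field_hom_on_diff: "x \<in> K \<Longrightarrow> y \<in> K \<Longrightarrow> s (x - y) = s x - s y"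
  using field_hom_on_add[OF s, of x "- y"] K by (simp add: field_hom_on_uminus subfield_uminus)

lemma field_hom_on_sum: "(\<And>x. x \<in> A \<Longrightarrow> f x \<in> K) \<Longrightarrow> s (sum f A) = (\<Sum>x\<in>A. s (f x))"
  by (induction A rule: infinite_finite_induct)
    (auto simp: field_hom_on_zero field_hom_on_add[OF s] subfield_sum K)

lemma inj_on_field_hom_on:
  assumes s1: "s 1 \<noteq> 0"
  shows "inj_on s K"
proof (rule inj_onI)
  fix x y assume x: "x \<in> K" and y: "y \<in> K" and e: "s x = s y"
  show "x = y"
  proof (rule ccontr)
    assume "x \<noteq> y"
    then have "s 1 = s (x - y) * s (inverse (x - y))"
      using field_hom_on_mult[OF s, of "x - y" "inverse (x - y)"] K x y by (simp add: subfield_closed)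
    then show False using s1 e field_hom_on_diff[OF x y] by simp
  qed
qed

context
  assumes inj: "inj_on s K"
begin

lemma field_hom_on_one: "s 1 = 1"
proof -
  have "s 1 \<noteq> s 0"
    using inj_onD[OF inj, of 1 0] K by (auto simp: subfield_one subfield_zero)
  then have "s 1 \<noteq> 0" by (simp add: field_hom_on_zero)
  moreover have "s 1 = s 1 * s 1" using field_hom_on_mult[OF s, of 1 1] K by (simp add: subfield_one)
  ultimately show ?thesis by (metis mult_cancel_left2)
qed

lemma field_hom_on_inverse: "x \<in> K \<Longrightarrow> s (inverse x) = inverse (s x)"
proof (cases "x = 0")
  case False
  assume x: "x \<in> K"
  then have "s x * s (inverse x) = 1"
    using field_hom_on_mult[OF s, of x "inverse x"] field_hom_on_one False K by (simp add: subfield_inverse)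
  then show ?thesis by (metis inverse_unique)
qed (simp add: field_hom_on_zero)

lemma field_hom_on_divide: "x \<in> K \<Longrightarrow> y \<in> K \<Longrightarrow> s (x / y) = s x / s y"
  by (simp add: divide_inverse field_hom_on_mult[OF s] field_hom_on_inverse subfield_inverse K)

lemma field_hom_on_power: "x \<in> K \<Longrightarrow> s (x ^ n) = s x ^ n"
  by (induction n) (auto simp: field_hom_on_one field_hom_on_mult[OF s] subfield_power K)

lemma field_hom_on_two: "s 2 = 2"
  using field_hom_on_add[OF s, of 1 1] K field_hom_on_one by (metis one_add_one subfield_one)

end

end

section \<open>Galois groups\<close>

lemma gal_group_carrier_iff:
  "s \<in> carrier (gal_group K F) \<longleftrightarrow>
     bij_betw s K K \<and> field_hom_on K s \<and> (\<forall>x\<in>F. s x = x) \<and> (\<forall>x. x \<notin> K \<longrightarrow> s x = x)"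
  by (simp add: gal_group_def field_hom_on_def)

lemma gal_group_mult [simp]: "s \<otimes>\<^bsub>gal_group K F\<^esub> t = s \<circ> t"
  and gal_group_one [simp]: "\<one>\<^bsub>gal_group K F\<^esub> = id"
  by (simp_all add: gal_group_def)

context
  fixes s :: "'a::field \<Rightarrow> 'a" and K F :: "'a set"
  assumes s: "s \<in> carrier (gal_group K F)"
begin

lemma gal_group_bij_betw: "bij_betw s K K"
  and gal_group_field_hom_on: "field_hom_on K s"
  and gal_group_fixes: "x \<in> F \<Longrightarrow> s x = x"
  and gal_group_outside: "x \<notin> K \<Longrightarrow> s x = x"
  using s by (simp_all add: gal_group_carrier_iff)

lemma gal_group_inj_on: "inj_on s K"
  using gal_group_bij_betw by (simp add: bij_betw_def)

lemma gal_group_closed: "x \<in> K \<Longrightarrow> s x \<in> K"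
  using gal_group_bij_betw by (simp add: bij_betwE)

end

lemma gal_group_id: "id \<in> carrier (gal_group K F)"
  by (simp add: gal_group_carrier_iff field_hom_on_def)

lemma gal_group_comp:
  assumes s: "s \<in> carrier (gal_group K F)" and t: "t \<in> carrier (gal_group K F)"
  shows "s \<circ> t \<in> carrier (gal_group K F)"
  using assms bij_betw_trans[OF gal_group_bij_betw[OF t] gal_group_bij_betw[OF s]]
    gal_group_closed[OF t]
  by (auto simp: gal_group_carrier_iff field_hom_on_def)

lemma gal_group_eqI:
  assumes "s \<in> carrier (gal_group K F)" "t \<in> carrier (gal_group K F)" "\<And>x. x \<in> K \<Longrightarrow> s x = t x"
  shows "s = t"
proof
  fix x show "s x = t x"
    using assms gal_group_outside[OF assms(1)] gal_group_outside[OF assms(2)]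
    by (cases "x \<in> K") auto
qed

lemma gal_group_carrierI:
  assumes K: "is_subfield K" and hom: "field_hom_on K \<sigma>" and one: "\<sigma> 1 = 1"
    and onto: "\<sigma> ` K = K" and fixes_F: "\<And>x. x \<in> F \<Longrightarrow> \<sigma> x = x"
    and outside: "\<And>x. x \<notin> K \<Longrightarrow> \<sigma> x = x"
  shows "\<sigma> \<in> carrier (gal_group K F)"
  using inj_on_field_hom_on[OF K hom] one onto fixes_F outside hom
  by (simp add: gal_group_carrier_iff bij_betw_def)

lemma group_gal_group:
  assumes K: "is_subfield K"
  shows "group (gal_group K F)"
proof (rule groupI)
  fix s assume s: "s \<in> carrier (gal_group K F)"
  define s' where "s' = (\<lambda>x. if x \<in> K then inv_into K s x else x)"
  have bij: "bij_betw s K K" and hom: "field_hom_on K s" and inj: "inj_on s K"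
    using s gal_group_bij_betw gal_group_field_hom_on gal_group_inj_on by blast+
  have s'K: "s' x \<in> K" and ss': "s (s' x) = x" if "x \<in> K" for x
    using that bij bij_betwE[OF bij_betw_inv_into[OF bij]]
    by (simp_all add: s'_def bij_betw_inv_into_right)
  have s's: "s' (s x) = x" if "x \<in> K" for x
    using that bij inj by (simp add: s'_def bij_betwE)
  have preserve: "s' (f x y) = f (s' x) (s' y)"
    if f: "\<And>x y. x \<in> K \<Longrightarrow> y \<in> K \<Longrightarrow> s (f x y) = f (s x) (s y) \<and> f x y \<in> K"
      and xy: "x \<in> K" "y \<in> K" for f x y
    using f[OF s'K[OF xy(1)] s'K[OF xy(2)]] s's ss' xy by metis
  have "field_hom_on K s'"
    unfolding field_hom_on_def
    using preserve[of "(+)"] preserve[of "(*)"] field_hom_on_add[OF hom]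
      field_hom_on_mult[OF hom] K by (simp add: subfield_add subfield_mult)
  moreover have "bij_betw s' K K"
    using bij_betw_inv_into[OF bij] by (rule bij_betw_cong[THEN iffD1, rotated]) (simp add: s'_def)
  moreover have "s' x = x" if "x \<in> F" for x
    using s's[of x] gal_group_fixes[OF s that] s'_def by (cases "x \<in> K") auto
  ultimately have "s' \<in> carrier (gal_group K F)"
    by (simp add: gal_group_carrier_iff s'_def)
  moreover have "s' \<circ> s = id"
  proof
    fix x show "(s' \<circ> s) x = id x"
      using s's gal_group_outside[OF s, of x] by (cases "x \<in> K") (auto simp: s'_def)
  qed
  ultimately show "\<exists>s'\<in>carrier (gal_group K F). s' \<otimes>\<^bsub>gal_group K F\<^esub> s = \<one>\<^bsub>gal_group K F\<^esub>"
    by auto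
qed (auto simp: gal_group_id gal_group_comp comp_assoc)

section \<open>Restricting automorphisms to a Galois subextension\<close>

lemma coeff_mult_in_subfield:
  "is_subfield L \<Longrightarrow> (\<And>i. coeff p i \<in> L) \<Longrightarrow> (\<And>i. coeff q i \<in> L) \<Longrightarrow> coeff (p * q) n \<in> L"
  unfolding coeff_mult by (auto intro!: subfield_sum subfield_mult)

lemma coeff_linear_factor_in_subfield:
  "is_subfield L \<Longrightarrow> c \<in> L \<Longrightarrow> coeff [:- c, 1:] n \<in> L"
  by (cases n; cases "n - 1") (auto simp: subfield_closed)

lemma coeff_prod_linear_factors_in_subfield:
  assumes L: "is_subfield L" and c: "\<And>t. t \<in> A \<Longrightarrow> c t \<in> L"
  shows "coeff (\<Prod>t\<in>A. [:- c t, 1:]) n \<in> L"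
  using c
proof (induction A arbitrary: n rule: infinite_finite_induct)
  case (insert x A)
  then show ?case
    unfolding prod.insert[OF insert.hyps]
    by (intro coeff_mult_in_subfield[OF L] coeff_linear_factor_in_subfield[OF L]) simp_all
qed (use L in \<open>simp_all add: coeff_1 subfield_zero subfield_one\<close>)

context
  fixes L :: "'a::field set" and f :: "'a \<Rightarrow> 'a"
  assumes L: "is_subfield L" and f: "field_hom_on L f"
begin

lemma map_poly_mult_field_hom_on:
  assumes p: "\<And>i. coeff p i \<in> L" and q: "\<And>i. coeff q i \<in> L"
  shows "map_poly f (p * q) = map_poly f p * map_poly f q"
proof (rule poly_eqI)
  have f0: "f 0 = 0" using field_hom_on_zero[OF L f] .
  fix n show "coeff (map_poly f (p * q)) n = coeff (map_poly f p * map_poly f q) n"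
    unfolding coeff_map_poly[of f, OF f0] coeff_mult
    by (simp add: field_hom_on_sum[OF L f] field_hom_on_mult[OF f] p q subfield_mult[OF L]
        coeff_map_poly[of f, OF f0])
qed

context
  assumes inj: "inj_on f L"
begin

lemma map_poly_prod_linear_factors:
  assumes c: "\<And>t. t \<in> A \<Longrightarrow> c t \<in> L"
  shows "map_poly f (\<Prod>t\<in>A. [:- c t, 1:]) = (\<Prod>t\<in>A. [:- f (c t), 1:])"
  using c
proof (induction A rule: infinite_finite_induct)
  case (insert x A)
  have "map_poly f [:- c x, 1:] = [:- f (c x), 1:]"
    using insert field_hom_on_zero[OF L f] field_hom_on_uminus[OF L f] field_hom_on_one[OF L f inj]
    by (simp add: map_poly_pCons)
  moreover have "map_poly f ([:- c x, 1:] * (\<Prod>t\<in>A. [:- c t, 1:])) =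
      map_poly f [:- c x, 1:] * map_poly f (\<Prod>t\<in>A. [:- c t, 1:])"
    using insert by (intro map_poly_mult_field_hom_on coeff_linear_factor_in_subfield[OF L]
        coeff_prod_linear_factors_in_subfield[OF L]) simp_all
  ultimately show ?case
    using insert unfolding prod.insert[OF insert.hyps] by simp
qed (simp_all add: field_hom_on_one[OF L f inj])

lemma field_hom_on_poly:
  assumes c: "\<And>j. coeff p j \<in> L" and coeff_fixed: "\<And>j. f (coeff p j) = coeff p j" and y: "y \<in> L"
  shows "f (poly p y) = poly p (f y)"
  unfolding poly_altdef
  by (simp add: field_hom_on_sum[OF L f] field_hom_on_mult[OF f] field_hom_on_power[OF L f inj]
      c y coeff_fixed subfield_power[OF L] subfield_mult[OF L])

end

end

text \<open>The orbit polynomial \<open>\<Prod>t\<in>Gal(L/F). (X - t y)\<close> has its coefficients in the fixed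
  field \<open>F\<close>, so any \<open>F\<close>-embedding maps \<open>y\<close> to one of its roots \<open>t y\<close>.\<close>
lemma galois_embedding_conjugate:
  assumes gal: "galois F L" and fin: "finite (carrier (gal_group L F))"
    and K: "is_subfield K" and LK: "L \<subseteq> K" and s: "field_hom_on K s" and inj: "inj_on s K"
    and F_fixed: "\<And>x. x \<in> F \<Longrightarrow> s x = x" and y: "y \<in> L"
  shows "\<exists>t\<in>carrier (gal_group L F). s y = t y"
proof -
  define G where "G = carrier (gal_group L F)"
  have L: "is_subfield L" and ff: "fixed_field L F = F"
    using gal by (auto simp: galois_def)
  interpret group "gal_group L F" using group_gal_group[OF L] .
  define p where "p = (\<Prod>t\<in>G. [:- t y, 1:])"
  have tyL: "t y \<in> L" if "t \<in> G" for t using that y gal_group_closed G_def by blast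
  have cL: "coeff p j \<in> L" for j
    unfolding p_def using coeff_prod_linear_factors_in_subfield[OF L tyL] .
  have cF: "coeff p j \<in> F" for j
  proof -
    have "t' (coeff p j) = coeff p j" if t': "t' \<in> G" for t'
    proof -
      have ht: "field_hom_on L t'" and it: "inj_on t' L"
        using t' G_def gal_group_field_hom_on gal_group_inj_on by auto
      have "map_poly t' p = (\<Prod>t\<in>G. [:- (t' \<circ> t) y, 1:])"
        unfolding p_def using map_poly_prod_linear_factors[OF L ht it, of G "\<lambda>t. t y"] tyL by simp
      also have "\<dots> = (\<Prod>t\<in>(\<lambda>t. t' \<circ> t) ` G. [:- t y, 1:])"
        using inj_on_cmult[OF t'[unfolded G_def]] by (simp add: prod.reindex G_def)
      also have "(\<lambda>t. t' \<circ> t) ` G = G"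
        using surj_const_mult[OF t'[unfolded G_def]] by (simp add: G_def)
      finally have "map_poly t' p = p" unfolding p_def .
      then show ?thesis
        using coeff_map_poly[of t' p j] field_hom_on_zero[OF L ht] by simp
    qed
    then have "coeff p j \<in> fixed_field L F" unfolding fixed_field_def G_def using cL by blast
    then show ?thesis using ff by simp
  qed
  have "poly p y = 0"
    unfolding p_def poly_prod using fin
    by (simp add: prod_zero_iff G_def) (rule bexI[of _ id], auto simp: gal_group_id)
  moreover have "s (poly p y) = poly p (s y)"
    using field_hom_on_poly[OF K s inj, of p y] cL LK cF F_fixed y by auto
  ultimately have "poly p (s y) = 0" using field_hom_on_zero[OF K s] by simp
  then show ?thesis unfolding p_def poly_prod using fin by (simp add: prod_zero_iff G_def)
qed

definition restrict_to :: "('a \<Rightarrow> 'a) \<Rightarrow> 'a set \<Rightarrow> 'a \<Rightarrow> 'a" where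
  "restrict_to s L = (\<lambda>x. if x \<in> L then s x else x)"

lemma restrict_to_comp:
  "(\<And>y. y \<in> L \<Longrightarrow> s' y \<in> L) \<Longrightarrow> restrict_to (s \<circ> s') L = restrict_to s L \<circ> restrict_to s' L"
  by (auto simp: restrict_to_def fun_eq_iff)

lemma restrict_to_eqI:
  "s \<in> carrier (gal_group L F) \<Longrightarrow> (\<And>x. x \<in> L \<Longrightarrow> \<sigma> x = s x) \<Longrightarrow> restrict_to \<sigma> L = s"
  by (auto simp: restrict_to_def fun_eq_iff gal_group_outside)

context
  fixes F L K :: "'a::field set" and s :: "'a \<Rightarrow> 'a"
  assumes gal: "galois F L" and fin: "finite (carrier (gal_group L F))"
    and K: "is_subfield K" and LK: "L \<subseteq> K" and s: "s \<in> carrier (gal_group K F)"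
begin

lemma gal_group_maps_galois_subfield: "y \<in> L \<Longrightarrow> s y \<in> L"
  using galois_embedding_conjugate[OF gal fin K LK gal_group_field_hom_on[OF s]
      gal_group_inj_on[OF s] gal_group_fixes[OF s]] gal_group_closed by metis

text \<open>Surjectivity: \<open>s\<close> permutes the finite orbit of \<open>y\<close> under \<open>Gal(L/F)\<close>.\<close>
lemma restrict_to_in_gal_group: "restrict_to s L \<in> carrier (gal_group L F)"
proof -
  define G where "G = carrier (gal_group L F)"
  have L: "is_subfield L" and FL: "F \<subseteq> L" using gal by (auto simp: galois_def)
  have inj: "inj_on s L" using gal_group_inj_on[OF s] LK inj_on_subset by blast
  have surj: "y \<in> s ` L" if y: "y \<in> L" for y
  proof -
    define orbit where "orbit = (\<lambda>t. t y) ` G"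
    have orbit_L: "orbit \<subseteq> L" using orbit_def G_def gal_group_closed y by blast
    have "s ` orbit \<subseteq> orbit"
    proof
      fix z assume "z \<in> s ` orbit"
      then obtain t where t: "t \<in> G" and z: "z = s (t y)" using orbit_def by auto
      have ty: "t y \<in> L" using t G_def gal_group_closed y by blast
      obtain t' where t': "t' \<in> G" "s (t y) = t' (t y)"
        using galois_embedding_conjugate[OF gal fin K LK gal_group_field_hom_on[OF s]
            gal_group_inj_on[OF s] gal_group_fixes[OF s] ty] G_def by blast
      have "t' \<circ> t \<in> G" using t t' gal_group_comp G_def by blast
      then show "z \<in> orbit" using z t' orbit_def by (metis comp_apply image_eqI)
    qed
    then have "s ` orbit = orbit"
      using endo_inj_surj fin inj orbit_L inj_on_subset by (metis G_def finite_imageI orbit_def)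
    moreover have "y \<in> orbit" using orbit_def G_def gal_group_id by (metis id_apply image_eqI)
    ultimately show ?thesis using orbit_L by blast
  qed
  have "bij_betw (restrict_to s L) L L"
    unfolding bij_betw_def restrict_to_def
    using inj gal_group_maps_galois_subfield surj by (auto simp: inj_on_def image_iff)
  moreover have "field_hom_on L (restrict_to s L)"
    using gal_group_field_hom_on[OF s] LK L
    by (auto simp: field_hom_on_def restrict_to_def subfield_add subfield_mult)
  ultimately show ?thesis
    unfolding gal_group_carrier_iff restrict_to_def using gal_group_fixes[OF s] FL by auto
qed

end

lemma restrict_to_hom:
  assumes gal: "galois F L" and fin: "finite (carrier (gal_group L F))"
    and K: "is_subfield K" and LK: "L \<subseteq> K"
  shows "(\<lambda>s. restrict_to s L) \<in> hom (gal_group K F) (gal_group L F)"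
proof (rule homI)
  fix s t assume s: "s \<in> carrier (gal_group K F)" and t: "t \<in> carrier (gal_group K F)"
  show "restrict_to (s \<otimes>\<^bsub>gal_group K F\<^esub> t) L =
      restrict_to s L \<otimes>\<^bsub>gal_group L F\<^esub> restrict_to t L"
    by (simp add: restrict_to_comp[OF gal_group_maps_galois_subfield[OF gal fin K LK t]])
qed (rule restrict_to_in_gal_group[OF gal fin K LK])

section \<open>Quadratic extensions\<close>

definition quad_ext :: "'a::field set \<Rightarrow> 'a \<Rightarrow> 'a set" where
  "quad_ext F y = {u + v * y | u v. u \<in> F \<and> v \<in> F}"

lemma quad_extI: "u \<in> F \<Longrightarrow> v \<in> F \<Longrightarrow> u + v * y \<in> quad_ext F y"
  unfolding quad_ext_def by blast

lemma quad_extE: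
  assumes "x \<in> quad_ext F y"
  obtains u v where "u \<in> F" "v \<in> F" "x = u + v * y"
  using assms unfolding quad_ext_def by blast

lemma subset_quad_ext: "is_subfield F \<Longrightarrow> F \<subseteq> quad_ext F y"
  using quad_extI[of _ F 0 y] by (force simp: subfield_zero)

lemma generator_in_quad_ext: "is_subfield F \<Longrightarrow> y \<in> quad_ext F y"
  using quad_extI[of 0 F 1 y] by (simp add: subfield_zero subfield_one)

lemma quad_ext_mono: "F \<subseteq> D \<Longrightarrow> quad_ext F y \<subseteq> quad_ext D y"
  unfolding quad_ext_def by blast

lemma quad_ext_subset: "is_subfield L \<Longrightarrow> F \<subseteq> L \<Longrightarrow> y \<in> L \<Longrightarrow> quad_ext F y \<subseteq> L"
  unfolding quad_ext_def by (auto intro!: subfield_add subfield_mult)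

text \<open>The inverse of \<open>u + v y\<close> is \<open>(u - v y) / (u\<^sup>2 - v\<^sup>2 y\<^sup>2)\<close>; if the norm
  \<open>u\<^sup>2 - v\<^sup>2 y\<^sup>2\<close> vanishes, then \<open>v = 0\<close> or \<open>y = \<plusminus>u/v\<close>, and \<open>u + v y \<in> F\<close> anyway.\<close>
lemma inverse_in_quad_ext:
  assumes F: "is_subfield F" and yy: "y * y \<in> F" and x: "x \<in> quad_ext F y"
  shows "inverse x \<in> quad_ext F y"
proof -
  obtain u v where uv: "u \<in> F" "v \<in> F" "x = u + v * y" using x by (rule quad_extE)
  define n where "n = u * u - v * v * (y * y)"
  have nF: "n \<in> F" using uv F yy n_def by (simp add: subfield_diff subfield_mult)
  show ?thesis
  proof (cases "n = 0")
    case False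
    have "x * (u - v * y) = n" using uv n_def by (simp add: algebra_simps)
    then have "x * ((u - v * y) / n) = 1" using False by (metis divide_self times_divide_eq_right)
    then have "inverse x = (u - v * y) / n" by (metis inverse_unique)
    also have "\<dots> = u / n + (- v / n) * y" by (simp add: diff_divide_distrib)
    finally have "inverse x = u / n + (- v / n) * y" .
    then show ?thesis using uv(1,2) nF F by (metis quad_extI subfield_divide subfield_uminus)
  next
    case True
    have "x \<in> F"
    proof (cases "v = 0")
      case False
      have uu: "u * u = v * v * (y * y)" using True by (simp add: n_def)
      have "(u / v) * (u / v) = (u * u) / (v * v)" by simp
      also have "\<dots> = y * y" unfolding uu using False by simp
      finally have "y = u / v \<or> y = - (u / v)" by (metis square_eq_iff)
      then have "y \<in> F" using uv F by (auto simp: subfield_divide subfield_uminus)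
      then show ?thesis using uv F by (simp add: subfield_add subfield_mult)
    qed (use uv in simp)
    then show ?thesis using F subset_quad_ext subfield_inverse by blast
  qed
qed

lemma subfield_quad_ext:
  assumes F: "is_subfield F" and yy: "y * y \<in> F"
  shows "is_subfield (quad_ext F y)"
proof -
  have add: "x + z \<in> quad_ext F y" and mult: "x * z \<in> quad_ext F y"
    if x: "x \<in> quad_ext F y" and z: "z \<in> quad_ext F y" for x z
  proof -
    obtain u v where uv: "u \<in> F" "v \<in> F" "x = u + v * y" using x by (rule quad_extE)
    obtain u' v' where uv': "u' \<in> F" "v' \<in> F" "z = u' + v' * y" using z by (rule quad_extE)
    have "x + z = (u + u') + (v + v') * y" using uv uv' by (simp add: algebra_simps)
    then show "x + z \<in> quad_ext F y"
      using uv(1,2) uv'(1,2) F by (metis quad_extI subfield_add)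
    have "x * z = (u * u' + v * v' * (y * y)) + (u * v' + v * u') * y"
      using uv uv' by (simp add: algebra_simps)
    then show "x * z \<in> quad_ext F y"
      using uv(1,2) uv'(1,2) F yy by (metis quad_extI subfield_add subfield_mult)
  qed
  have neg: "- x \<in> quad_ext F y" if x: "x \<in> quad_ext F y" for x
  proof -
    obtain u v where uv: "u \<in> F" "v \<in> F" "x = u + v * y" using x by (rule quad_extE)
    then have "- x = (- u) + (- v) * y" by simp
    then show ?thesis using uv(1,2) F by (metis quad_extI subfield_uminus)
  qed
  have "0 \<in> quad_ext F y" "1 \<in> quad_ext F y"
    using subset_quad_ext[OF F] subfield_zero[OF F] subfield_one[OF F] by blast+
  then show ?thesis
    unfolding is_subfield_def by (simp add: add mult neg inverse_in_quad_ext[OF F yy])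
qed

lemma quad_ext_coords_unique:
  assumes D: "is_subfield D" and y: "y \<notin> D"
    and uv: "u \<in> D" "v \<in> D" "u' \<in> D" "v' \<in> D" and eq: "u + v * y = u' + v' * y"
  shows "u = u' \<and> v = v'"
proof (cases "v = v'")
  case False
  have "(v - v') * y = u' - u" using eq by (simp add: algebra_simps)
  then have "y = (u' - u) / (v - v')" using False by (simp add: field_simps)
  then show ?thesis using uv D y by (simp add: subfield_closed)
qed (use eq in simp)

definition independent_over :: "'a::field set \<Rightarrow> 'a set \<Rightarrow> bool" where
  "independent_over F B \<longleftrightarrow>
     (\<forall>c. (\<forall>x\<in>B. c x \<in> F) \<and> (\<Sum>x\<in>B. c x * x) = 0 \<longrightarrow> (\<forall>x\<in>B. c x = 0))"

definition spans_over :: "'a::field set \<Rightarrow> 'a set \<Rightarrow> 'a set \<Rightarrow> bool" where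
  "spans_over F B E \<longleftrightarrow> (\<forall>z\<in>E. \<exists>c. (\<forall>x\<in>B. c x \<in> F) \<and> z = (\<Sum>x\<in>B. c x * x))"

lemma ext_degree_iff:
  "ext_degree F E n \<longleftrightarrow>
     (\<exists>B. finite B \<and> card B = n \<and> B \<subseteq> E \<and> independent_over F B \<and> spans_over F B E)"
  unfolding ext_degree_def independent_over_def spans_over_def by blast

lemma zero_notin_independent:
  assumes F: "is_subfield F" and B: "independent_over F B"
  shows "0 \<notin> B"
proof
  assume "0 \<in> B"
  define c :: "'a \<Rightarrow> 'a" where "c = (\<lambda>x. if x = 0 then 1 else 0)"
  have "(\<Sum>x\<in>B. c x * x) = 0" by (rule sum.neutral) (simp add: c_def)
  moreover have "\<forall>x\<in>B. c x \<in> F" using F by (simp add: c_def subfield_zero subfield_one)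
  ultimately have "c 0 = 0"
    using B[unfolded independent_over_def, rule_format, of c] \<open>0 \<in> B\<close> by blast
  then show False by (simp add: c_def)
qed

text \<open>Three elements of \<open>F + F y\<close> are \<open>F\<close>-dependent: generically the cofactors of their
  coordinate matrix give a relation, otherwise two of them are proportional.\<close>
lemma quad_ext_three_dependent:
  assumes F: "is_subfield F" and x: "x1 \<in> quad_ext F y" "x2 \<in> quad_ext F y" "x3 \<in> quad_ext F y"
  shows "\<exists>k1 k2 k3. k1 \<in> F \<and> k2 \<in> F \<and> k3 \<in> F \<and> (k1 \<noteq> 0 \<or> k2 \<noteq> 0 \<or> k3 \<noteq> 0) \<and>
    k1 * x1 + k2 * x2 + k3 * x3 = 0"
proof -
  obtain u1 v1 u2 v2 u3 v3 where uv: "u1 \<in> F" "v1 \<in> F" "x1 = u1 + v1 * y"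
    "u2 \<in> F" "v2 \<in> F" "x2 = u2 + v2 * y" "u3 \<in> F" "v3 \<in> F" "x3 = u3 + v3 * y"
    using x by (meson quad_extE)
  define c1 where "c1 = u2 * v3 - u3 * v2"
  define c2 where "c2 = u3 * v1 - u1 * v3"
  define c3 where "c3 = u1 * v2 - u2 * v1"
  have cF: "c1 \<in> F" "c2 \<in> F" "c3 \<in> F"
    using uv F by (simp_all add: c1_def c2_def c3_def subfield_diff subfield_mult)
  have rel: "c1 * x1 + c2 * x2 + c3 * x3 = 0"
    using uv by (simp add: c1_def c2_def c3_def algebra_simps)
  show ?thesis
  proof (cases "c1 \<noteq> 0 \<or> c2 \<noteq> 0 \<or> c3 \<noteq> 0")
    case True then show ?thesis using cF rel by blast
  next
    case False
    then have c3: "u1 * v2 = u2 * v1" by (simp add: c3_def)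
    consider "u1 \<noteq> 0" | "v1 \<noteq> 0" | "x1 = 0" using uv by force
    then show ?thesis
    proof cases
      case 1
      have "u2 * x1 + (- u1) * x2 + 0 * x3 = 0" using uv c3 by (simp add: algebra_simps)
      then show ?thesis
        using 1 uv F by (intro exI[of _ u2] exI[of _ "- u1"] exI[of _ 0]) (simp add: subfield_closed)
    next
      case 2
      have "v2 * x1 + (- v1) * x2 + 0 * x3 = 0" using uv c3 by (simp add: algebra_simps)
      then show ?thesis
        using 2 uv F by (intro exI[of _ v2] exI[of _ "- v1"] exI[of _ 0]) (simp add: subfield_closed)
    next
      case 3
      then show ?thesis
        using F by (intro exI[of _ 1] exI[of _ 0] exI[of _ 0]) (simp add: subfield_closed)
    qed
  qed
qed

lemma ext_degree_le_two:
  assumes F: "is_subfield F" and deg: "ext_degree F E n" and E: "E \<subseteq> quad_ext F y"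
  shows "n \<le> 2"
proof (rule ccontr)
  assume "\<not> n \<le> 2"
  obtain B where B: "finite B" "card B = n" "B \<subseteq> E" and indep: "independent_over F B"
    using deg unfolding ext_degree_iff by blast
  have "3 \<le> card B" using \<open>\<not> n \<le> 2\<close> B by simp
  then obtain T where T: "T \<subseteq> B" "card T = 3" by (meson obtain_subset_with_card_n)
  then obtain x1 x2 x3 where T3: "T = {x1, x2, x3}" and dist: "x1 \<noteq> x2" "x1 \<noteq> x3" "x2 \<noteq> x3"
    unfolding card_3_iff by blast
  have "x1 \<in> quad_ext F y" "x2 \<in> quad_ext F y" "x3 \<in> quad_ext F y"
    using T T3 B E by auto
  then obtain k1 k2 k3 where k: "k1 \<in> F" "k2 \<in> F" "k3 \<in> F" "k1 \<noteq> 0 \<or> k2 \<noteq> 0 \<or> k3 \<noteq> 0"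
    "k1 * x1 + k2 * x2 + k3 * x3 = 0"
    using quad_ext_three_dependent[OF F] by blast
  define c where "c = (\<lambda>x. if x = x1 then k1 else if x = x2 then k2 else if x = x3 then k3 else 0)"
  have c123: "c x1 = k1" "c x2 = k2" "c x3 = k3" using dist by (simp_all add: c_def)
  have "(\<Sum>x\<in>B. c x * x) = (\<Sum>x\<in>T. c x * x)"
    using B T by (intro sum.mono_neutral_right) (auto simp: c_def T3)
  also have "\<dots> = c x1 * x1 + c x2 * x2 + c x3 * x3" using dist by (simp add: T3 add.assoc)
  also have "\<dots> = 0" using k c123 by simp
  finally have "(\<Sum>x\<in>B. c x * x) = 0" .
  moreover have "\<forall>x\<in>B. c x \<in> F" using k F by (simp add: c_def subfield_zero)
  ultimately have c0: "\<forall>x\<in>B. c x = 0"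
    using indep[unfolded independent_over_def, rule_format, of c] by blast
  have "x1 \<in> B" "x2 \<in> B" "x3 \<in> B" using T T3 by auto
  then have "k1 = 0" "k2 = 0" "k3 = 0" using c0 c123 by metis+
  then show False using k(4) by simp
qed

context
  fixes F D :: "'a::field set" and y :: 'a and B :: "'a set"
  assumes D: "is_subfield D" and y: "y \<notin> D" and B: "finite B" "B \<subseteq> D"
begin

lemma times_generator_disjoint:
  assumes "0 \<notin> B"
  shows "B \<inter> (\<lambda>x. x * y) ` B = {}"
proof (rule ccontr)
  assume "B \<inter> (\<lambda>x. x * y) ` B \<noteq> {}"
  then obtain x x' where xx': "x \<in> B" "x' \<in> B" "x = x' * y" by blast
  then have "y = x / x'" using assms by auto
  moreover have "x / x' \<in> D" using subfield_divide[OF D] xx'(1,2) B(2) by blast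
  ultimately show False using y by simp
qed

lemma sum_times_generator:
  assumes disj: "B \<inter> (\<lambda>x. x * y) ` B = {}"
  shows "(\<Sum>z\<in>B \<union> (\<lambda>x. x * y) ` B. c z * z) = (\<Sum>x\<in>B. c x * x) + (\<Sum>x\<in>B. c (x * y) * x) * y"
proof -
  have y0: "y \<noteq> 0" using y subfield_zero[OF D] by blast
  have inj: "inj_on (\<lambda>x. x * y) B" using y0 by (simp add: inj_on_def)
  have "(\<Sum>z\<in>B \<union> (\<lambda>x. x * y) ` B. c z * z) = (\<Sum>x\<in>B. c x * x) + (\<Sum>z\<in>(\<lambda>x. x * y) ` B. c z * z)"
    using B(1) disj by (simp add: sum.union_disjoint)
  also have "(\<Sum>z\<in>(\<lambda>x. x * y) ` B. c z * z) = (\<Sum>x\<in>B. c (x * y) * (x * y))"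
    using sum.reindex[OF inj] by simp
  also have "\<dots> = (\<Sum>x\<in>B. c (x * y) * x) * y" by (simp add: sum_distrib_right mult.assoc)
  finally show ?thesis .
qed

lemma independent_over_quad_ext:
  assumes F: "F \<subseteq> D" and indep: "independent_over F B" and disj: "B \<inter> (\<lambda>x. x * y) ` B = {}"
  shows "independent_over F (B \<union> (\<lambda>x. x * y) ` B)"
  unfolding independent_over_def
proof (intro allI impI)
  fix c assume c: "(\<forall>z\<in>B \<union> (\<lambda>x. x * y) ` B. c z \<in> F) \<and> (\<Sum>z\<in>B \<union> (\<lambda>x. x * y) ` B. c z * z) = 0"
  have cB: "\<forall>x\<in>B. c x \<in> F" and cyB: "\<forall>x\<in>B. c (x * y) \<in> F" using c by auto
  have in_D: "(\<Sum>x\<in>B. c x * x) \<in> D" "(\<Sum>x\<in>B. c (x * y) * x) \<in> D"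
    using cB cyB B F D by (auto intro!: subfield_sum subfield_mult)
  have "(\<Sum>z\<in>B \<union> (\<lambda>x. x * y) ` B. c z * z) = 0" using c by blast
  then have "(\<Sum>x\<in>B. c x * x) + (\<Sum>x\<in>B. c (x * y) * x) * y = 0 + 0 * y"
    unfolding sum_times_generator[OF disj] by simp
  with in_D have "(\<Sum>x\<in>B. c x * x) = 0" "(\<Sum>x\<in>B. c (x * y) * x) = 0"
    using quad_ext_coords_unique[OF D y _ _ subfield_zero[OF D] subfield_zero[OF D]] by blast+
  then have "\<forall>x\<in>B. c x = 0" "\<forall>x\<in>B. c (x * y) = 0"
    using indep[unfolded independent_over_def, rule_format, of c]
      indep[unfolded independent_over_def, rule_format, of "\<lambda>x. c (x * y)"] cB cyB by blast+
  then show "\<forall>z\<in>B \<union> (\<lambda>x. x * y) ` B. c z = 0" by blast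
qed

lemma spans_over_quad_ext:
  assumes span: "spans_over F B D" and disj: "B \<inter> (\<lambda>x. x * y) ` B = {}"
  shows "spans_over F (B \<union> (\<lambda>x. x * y) ` B) (quad_ext D y)"
  unfolding spans_over_def
proof
  fix z assume "z \<in> quad_ext D y"
  then obtain u v where uv: "u \<in> D" "v \<in> D" "z = u + v * y" by (rule quad_extE)
  obtain c1 where c1: "\<forall>x\<in>B. c1 x \<in> F" "u = (\<Sum>x\<in>B. c1 x * x)"
    using span uv(1) unfolding spans_over_def by blast
  obtain c2 where c2: "\<forall>x\<in>B. c2 x \<in> F" "v = (\<Sum>x\<in>B. c2 x * x)"
    using span uv(2) unfolding spans_over_def by blast
  define c where "c = (\<lambda>z. if z \<in> B then c1 z else c2 (z / y))"
  have y0: "y \<noteq> 0" using y subfield_zero[OF D] by blast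
  have cy: "c (x * y) = c2 x" if "x \<in> B" for x
    using disj that y0 unfolding c_def by auto
  have "\<forall>z\<in>B \<union> (\<lambda>x. x * y) ` B. c z \<in> F" using c1 c2 cy by (auto simp: c_def)
  moreover have "(\<Sum>x\<in>B. c x * x) = u" using c1 by (simp add: c_def)
  moreover have "(\<Sum>x\<in>B. c (x * y) * x) = v" using c2 cy by simp
  ultimately have "\<forall>z\<in>B \<union> (\<lambda>x. x * y) ` B. c z \<in> F"
    "z = (\<Sum>z\<in>B \<union> (\<lambda>x. x * y) ` B. c z * z)"
    using sum_times_generator[OF disj, of c] uv(3) by simp_all
  then show "\<exists>c. (\<forall>x\<in>B \<union> (\<lambda>x. x * y) ` B. c x \<in> F) \<and> z = (\<Sum>x\<in>B \<union> (\<lambda>x. x * y) ` B. c x * x)"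
    by blast
qed

end

text \<open>Tower law for a quadratic step: a basis \<open>B\<close> of \<open>D/F\<close> yields the basis \<open>B \<union> B y\<close>.\<close>
lemma ext_degree_quad_ext:
  assumes F: "is_subfield F" and D: "is_subfield D" and FD: "F \<subseteq> D" and y: "y \<notin> D"
    and deg: "ext_degree F D n"
  shows "ext_degree F (quad_ext D y) (2 * n)"
proof -
  obtain B where B: "finite B" "card B = n" "B \<subseteq> D"
    and indep: "independent_over F B" and span: "spans_over F B D"
    using deg unfolding ext_degree_iff by blast
  have disj: "B \<inter> (\<lambda>x. x * y) ` B = {}"
    using times_generator_disjoint[OF D y B(1,3) zero_notin_independent[OF F indep]] .
  have "inj_on (\<lambda>x. x * y) B" using y subfield_zero[OF D] by (auto simp: inj_on_def)
  then have "card (B \<union> (\<lambda>x. x * y) ` B) = 2 * n"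
    using B disj by (simp add: card_Un_disjoint card_image)
  moreover have "B \<union> (\<lambda>x. x * y) ` B \<subseteq> quad_ext D y"
    using B(3) subset_quad_ext[OF D] quad_extI[OF subfield_zero[OF D], of _ y] by auto
  ultimately show ?thesis
    unfolding ext_degree_iff
    using B(1) independent_over_quad_ext[OF D y B(1,3) FD indep disj]
      spans_over_quad_ext[OF D y B(1,3) span disj]
    by (intro exI[of _ "B \<union> (\<lambda>x. x * y) ` B"]) simp
qed

lemma adjoin_eq_quad_ext:
  assumes D: "is_subfield D" and yy: "y * y \<in> D" and C: "is_subfield C" and y: "y \<in> C"
    and CQ: "C \<subseteq> quad_ext D y"
  shows "adjoin D C = quad_ext D y"
proof
  show "adjoin D C \<subseteq> quad_ext D y"
    using subfield_quad_ext[OF D yy] subset_quad_ext[OF D] CQ by (intro adjoin_least) auto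
  show "quad_ext D y \<subseteq> adjoin D C"
    using adjoin_upper[of D C] y by (intro quad_ext_subset adjoin_subfield) auto
qed

lemma sqrt_notin_of_ext_degree_four:
  assumes F: "is_subfield F" and sq: "\<alpha> * \<alpha> \<in> F" "\<beta> * \<beta> \<in> F"
    and deg: "ext_degree F (adjoin F {\<alpha>, \<beta>}) 4"
  shows "\<alpha> \<notin> F" "\<beta> \<notin> F" "\<alpha> * \<beta> \<notin> F"
proof -
  have not_in_quad: "\<not> adjoin F {\<alpha>, \<beta>} \<subseteq> quad_ext F y" for y
    using ext_degree_le_two[OF F deg] by auto
  have adjoin_sub: "adjoin F {\<alpha>, \<beta>} \<subseteq> quad_ext F y"
    if "y * y \<in> F" "\<alpha> \<in> quad_ext F y" "\<beta> \<in> quad_ext F y" for y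
    using that subfield_quad_ext[OF F] subset_quad_ext[OF F] by (intro adjoin_least) auto
  show alpha: "\<alpha> \<notin> F"
    using adjoin_sub[OF sq(2)] not_in_quad subset_quad_ext[OF F] generator_in_quad_ext[OF F] by blast
  show "\<beta> \<notin> F"
    using adjoin_sub[OF sq(1)] not_in_quad subset_quad_ext[OF F] generator_in_quad_ext[OF F] by blast
  show "\<alpha> * \<beta> \<notin> F"
  proof
    assume ab: "\<alpha> * \<beta> \<in> F"
    have "\<alpha> \<noteq> 0" using alpha subfield_zero[OF F] by blast
    then have "\<beta> = 0 + ((\<alpha> * \<beta>) / (\<alpha> * \<alpha>)) * \<alpha>" by (simp add: field_simps)
    then have "\<beta> \<in> quad_ext F \<alpha>" using ab sq F by (metis quad_extI subfield_zero subfield_divide)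
    then show False
      using adjoin_sub[OF sq(1)] not_in_quad generator_in_quad_ext[OF F] by blast
  qed
qed

section \<open>Sign characters of square roots\<close>

lemma neq_uminus_self: "(2::'a::field) \<noteq> 0 \<Longrightarrow> x \<noteq> 0 \<Longrightarrow> (x::'a) \<noteq> - x"
  by (metis add_eq_0_iff2 mult_2 mult_eq_0_iff)

lemma gal_group_sqrt_cases:
  assumes L: "is_subfield L" and s: "s \<in> carrier (gal_group L F)" and x: "x \<in> L" and xx: "x * x \<in> F"
  shows "s x = x \<or> s x = - x"
proof -
  have "s x * s x = x * x"
    using field_hom_on_mult[OF gal_group_field_hom_on[OF s] x x] gal_group_fixes[OF s xx] by simp
  then show ?thesis by (simp only: square_eq_iff)
qed

definition sign_char :: "'a \<Rightarrow> ('a \<Rightarrow> 'a) \<Rightarrow> int" where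
  "sign_char x s = (if s x = x then 0 else 1)"

lemma sign_char_eq_imp_eq:
  "s x = x \<or> s x = - x \<Longrightarrow> t x = x \<or> t x = - x \<Longrightarrow> sign_char x s = sign_char x t \<Longrightarrow> s x = t x"
  by (auto simp: sign_char_def split: if_splits)

lemma sign_char_hom:
  assumes L: "is_subfield L" and x: "x \<in> L" and xx: "x * x \<in> F" and x_neq: "x \<noteq> - x"
  shows "sign_char x \<in> hom (gal_group L F) (integer_mod_group 2)"
proof (rule homI)
  fix s t assume s: "s \<in> carrier (gal_group L F)" and t: "t \<in> carrier (gal_group L F)"
  have s_neg: "s (- x) = - s x" using field_hom_on_uminus[OF L gal_group_field_hom_on[OF s] x] .
  from gal_group_sqrt_cases[OF L s x xx] gal_group_sqrt_cases[OF L t x xx]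
  show "sign_char x (s \<otimes>\<^bsub>gal_group L F\<^esub> t) =
      sign_char x s \<otimes>\<^bsub>integer_mod_group 2\<^esub> sign_char x t"
    using x_neq not_sym[OF x_neq] by (elim disjE) (simp_all add: sign_char_def s_neg)
qed (simp add: sign_char_def carrier_integer_mod_group)

lemma sign_char_mult:
  assumes L: "is_subfield L" and s: "s \<in> carrier (gal_group L F)"
    and xy: "x \<in> L" "y \<in> L" "x * x \<in> F" "y * y \<in> F" and neq: "x \<noteq> - x" "y \<noteq> - y" "x * y \<noteq> - (x * y)"
  shows "sign_char (x * y) s = (sign_char x s + sign_char y s) mod 2"
proof -
  have "s (x * y) = s x * s y"
    using field_hom_on_mult[OF gal_group_field_hom_on[OF s] xy(1,2)] .
  with gal_group_sqrt_cases[OF L s xy(1,3)] gal_group_sqrt_cases[OF L s xy(2,4)]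
  show ?thesis
    using neq not_sym[OF neq(1)] not_sym[OF neq(2)] not_sym[OF neq(3)]
    by (elim disjE) (simp_all add: sign_char_def)
qed

lemma sign_char_nontrivial:
  assumes gal: "galois F L" and x: "x \<in> L" "x \<notin> F"
  obtains s where "s \<in> carrier (gal_group L F)" "sign_char x s = 1"
proof -
  have "x \<notin> fixed_field L F" using gal x by (simp add: galois_def)
  then show ?thesis using that x by (auto simp: fixed_field_def sign_char_def)
qed

text \<open>Splitting \<open>z\<close> into its \<open>\<plusminus>1\<close>-eigencomponents \<open>(z \<plusminus> s z) / 2\<close> under an automorphism
  \<open>s\<close> of order two on \<open>z\<close>, and dividing the \<open>-1\<close>-component by a \<open>-1\<close>-eigenvector \<open>w\<close>.\<close>
lemma gal_group_involution_decomp: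
  fixes C :: "'a::field set"
  assumes C: "is_subfield C" and s: "s \<in> carrier (gal_group C F)" and two: "(2::'a) \<noteq> 0"
    and z: "z \<in> C" "s (s z) = z" and w: "w \<in> C" "w \<noteq> 0" "s w = - w"
  obtains z0 z1 where "z0 \<in> C" "z1 \<in> C" "s z0 = z0" "s z1 = z1" "z = z0 + z1 * w"
proof -
  have hom: "field_hom_on C s" and inj: "inj_on s C" and sz: "s z \<in> C"
    using s z gal_group_field_hom_on gal_group_inj_on gal_group_closed by blast+
  define z0 where "z0 = (z + s z) / 2"
  define z1 where "z1 = (z - s z) / (2 * w)"
  have two_w: "2 * w \<in> C" "s (2 * w) = - (2 * w)"
    using w C field_hom_on_mult[OF hom, of 2 w] field_hom_on_two[OF C hom inj]
    by (simp_all add: subfield_closed)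
  have "z0 \<in> C" "z1 \<in> C" using z sz two_w C by (simp_all add: z0_def z1_def subfield_closed)
  moreover have "s z0 = z0"
    using z sz C by (simp add: z0_def field_hom_on_divide[OF C hom inj] field_hom_on_add[OF hom]
        field_hom_on_two[OF C hom inj] subfield_closed add.commute)
  moreover have "s z1 = z1"
  proof -
    have "s (z - s z) = - (z - s z)" using field_hom_on_diff[OF C hom z(1) sz] z(2) by simp
    then show ?thesis
      using z sz two_w C
      by (simp add: z1_def field_hom_on_divide[OF C hom inj] subfield_diff minus_divide_left)
  qed
  moreover have "z = z0 + z1 * w"
    using two w by (simp add: z0_def z1_def add_divide_distrib[symmetric])
  ultimately show ?thesis using that by blast
qed

section \<open>The groups \<open>D\<close>, \<open>C\<close> and \<open>D \<curlywedge> C\<close>\<close>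

lemma int_interval_four: "{0..<4::int} = {0,1,2,3}"
  and int_interval_two: "{0..<2::int} = {0,1}"
  by code_simp+

lemma dihedral8_carrier: "carrier dihedral8 = {(0,0),(1,0),(2,0),(3,0),(0,1),(1,1),(2,1),(3,1)}"
  by (simp add: dihedral8_def int_interval_four int_interval_two) blast

lemma dihedral8_mult:
  "u \<otimes>\<^bsub>dihedral8\<^esub> v = ((fst u + (if snd u = 0 then fst v else - fst v)) mod 4, (snd u + snd v) mod 2)"
  by (simp add: dihedral8_def case_prod_beta)

lemma dihedral8_cases:
  "u \<in> carrier dihedral8 \<Longrightarrow> (u = (0,0) \<Longrightarrow> P) \<Longrightarrow> (u = (1,0) \<Longrightarrow> P) \<Longrightarrow> (u = (2,0) \<Longrightarrow> P) \<Longrightarrow>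
    (u = (3,0) \<Longrightarrow> P) \<Longrightarrow> (u = (0,1) \<Longrightarrow> P) \<Longrightarrow> (u = (1,1) \<Longrightarrow> P) \<Longrightarrow> (u = (2,1) \<Longrightarrow> P) \<Longrightarrow>
    (u = (3,1) \<Longrightarrow> P) \<Longrightarrow> P"
  by (auto simp: dihedral8_carrier)

lemma cyclic4_carrier: "carrier cyclic4 = {0,1,2,3}"
  by (simp add: carrier_integer_mod_group int_interval_four)

lemma integer_mod_group_2_carrier: "carrier (integer_mod_group 2) = {0,1}"
  by (simp add: carrier_integer_mod_group int_interval_two)

lemma dihedral8_idem: "u \<in> carrier dihedral8 \<Longrightarrow> u \<otimes>\<^bsub>dihedral8\<^esub> u = u \<Longrightarrow> u = (0,0)"
  by (erule dihedral8_cases) (simp_all add: dihedral8_mult)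

lemma dihedral8_order_four:
  "u \<in> carrier dihedral8 \<Longrightarrow> u \<otimes>\<^bsub>dihedral8\<^esub> u \<noteq> (0,0) \<Longrightarrow> u = (1,0) \<or> u = (3,0)"
  by (erule dihedral8_cases) (simp_all add: dihedral8_mult)

text \<open>\<open>D\<close> is generated by the involutions \<open>(0,1)\<close> and \<open>(1,1)\<close>, whose images in \<open>C\<close> have
  order at most two.\<close>
lemma hom_dihedral8_cyclic4_even:
  assumes h: "h \<in> hom dihedral8 cyclic4" and u: "u \<in> carrier dihedral8"
  shows "h u \<in> {0, 2}"
proof -
  have hm: "h (v \<otimes>\<^bsub>dihedral8\<^esub> w) = (h v + h w) mod 4"
    if "v \<in> carrier dihedral8" "w \<in> carrier dihedral8" for v w
    using hom_mult[OF h that] by simp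
  have hc: "h v \<in> {0,1,2,3}" if "v \<in> carrier dihedral8" for v
    using hom_in_carrier[OF h that] cyclic4_carrier by simp
  have involution: "h v \<in> {0,2}" if "v \<in> carrier dihedral8" "v \<otimes>\<^bsub>dihedral8\<^esub> v = (0,0)" for v
    using hm[OF that(1) that(1)] hm[of "(0,0)" "(0,0)"] hc[OF that(1)] hc[of "(0,0)"] that(2)
    by (auto simp: dihedral8_mult dihedral8_carrier)
  have r1: "h (0,1) \<in> {0,2}" and r2: "h (1,1) \<in> {0,2}"
    by (rule involution; simp add: dihedral8_carrier dihedral8_mult)+
  have e10: "h (1,0) \<in> {0,2}"
    using hm[of "(1,1)" "(0,1)"] r1 r2 by (auto simp: dihedral8_mult dihedral8_carrier)
  have e20: "h (2,0) \<in> {0,2}"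
    using hm[of "(1,0)" "(1,0)"] e10 by (auto simp: dihedral8_mult dihedral8_carrier)
  have e30: "h (3,0) \<in> {0,2}"
    using hm[of "(2,0)" "(1,0)"] e10 e20 by (auto simp: dihedral8_mult dihedral8_carrier)
  have e00: "h (0,0) \<in> {0,2}"
    using hm[of "(2,0)" "(2,0)"] e20 by (auto simp: dihedral8_mult dihedral8_carrier)
  have e21: "h (2,1) \<in> {0,2}"
    using hm[of "(2,0)" "(0,1)"] e20 r1 by (auto simp: dihedral8_mult dihedral8_carrier)
  have e31: "h (3,1) \<in> {0,2}"
    using hm[of "(3,0)" "(0,1)"] e30 r1 by (auto simp: dihedral8_mult dihedral8_carrier)
  show ?thesis using u r1 r2 e10 e20 e30 e00 e21 e31 by (elim dihedral8_cases) simp_all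
qed

lemma dihedral8_char:
  assumes c: "c \<in> hom dihedral8 (integer_mod_group 2)" and u: "u \<in> carrier dihedral8"
  shows "c u = (c (1,0) * fst u + c (0,1) * snd u) mod 2"
proof -
  have cm: "c (v \<otimes>\<^bsub>dihedral8\<^esub> w) = (c v + c w) mod 2"
    if "v \<in> carrier dihedral8" "w \<in> carrier dihedral8" for v w
    using hom_mult[OF c that] by simp
  have c01: "c v \<in> {0,1}" if "v \<in> carrier dihedral8" for v
    using hom_in_carrier[OF c that] integer_mod_group_2_carrier by simp
  have a: "c (1,0) \<in> {0,1}" "c (0,1) \<in> {0,1}" "c (0,0) \<in> {0,1}"
    using c01 by (auto simp: dihedral8_carrier)
  have e0: "c (0,0) = 0" using cm[of "(0,0)" "(0,0)"] a by (auto simp: dihedral8_mult dihedral8_carrier)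
  have e2: "c (2,0) = 0" using cm[of "(1,0)" "(1,0)"] a by (auto simp: dihedral8_mult dihedral8_carrier)
  have e3: "c (3,0) = c (1,0)" using cm[of "(2,0)" "(1,0)"] a e2 by (auto simp: dihedral8_mult dihedral8_carrier)
  have e11: "c (1,1) = (c (1,0) + c (0,1)) mod 2"
    using cm[of "(1,0)" "(0,1)"] by (auto simp: dihedral8_mult dihedral8_carrier)
  have e21: "c (2,1) = c (0,1)" using cm[of "(2,0)" "(0,1)"] e2 a by (auto simp: dihedral8_mult dihedral8_carrier)
  have e31: "c (3,1) = (c (1,0) + c (0,1)) mod 2"
    using cm[of "(3,0)" "(0,1)"] e3 by (auto simp: dihedral8_mult dihedral8_carrier)
  show ?thesis using u a by (elim dihedral8_cases) (auto simp: e0 e2 e3 e11 e21 e31)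
qed

definition dihedral8_shear :: "int \<times> int \<Rightarrow> int \<times> int" where
  "dihedral8_shear u = ((fst u + snd u) mod 4, snd u)"

lemma dihedral8_shear_iso: "dihedral8_shear \<in> iso dihedral8 dihedral8"
proof (rule isoI)
  show "dihedral8_shear \<in> hom dihedral8 dihedral8"
  proof (rule homI)
    fix u assume "u \<in> carrier dihedral8" then show "dihedral8_shear u \<in> carrier dihedral8"
      by (elim dihedral8_cases) (simp_all add: dihedral8_carrier dihedral8_shear_def)
  next
    fix u v assume "u \<in> carrier dihedral8" "v \<in> carrier dihedral8"
    then show "dihedral8_shear (u \<otimes>\<^bsub>dihedral8\<^esub> v) =
        dihedral8_shear u \<otimes>\<^bsub>dihedral8\<^esub> dihedral8_shear v"
      by (elim dihedral8_cases) (simp_all add: dihedral8_mult dihedral8_shear_def)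
  qed
  have "inj_on dihedral8_shear (carrier dihedral8)"
    by (simp add: dihedral8_carrier dihedral8_shear_def)
  moreover have "dihedral8_shear ` carrier dihedral8 = carrier dihedral8"
    by (simp add: dihedral8_carrier dihedral8_shear_def insert_commute)
  ultimately show "bij_betw dihedral8_shear (carrier dihedral8) (carrier dihedral8)"
    by (simp add: bij_betw_def)
qed

lemma dihedral8_char_relabel:
  assumes c: "c \<in> hom dihedral8 (integer_mod_group 2)" and c1: "c (1,0) = 1"
  obtains \<theta> where "\<theta> \<in> iso dihedral8 dihedral8" "\<And>u. u \<in> carrier dihedral8 \<Longrightarrow> lambdaD (\<theta> u) = c u"
proof -
  have c_eq: "c u = (fst u + c (0,1) * snd u) mod 2" if "u \<in> carrier dihedral8" for u
    using dihedral8_char[OF c that] c1 by simp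
  have "c (0,1) \<in> {0,1}"
    using hom_in_carrier[OF c] integer_mod_group_2_carrier by (simp add: dihedral8_carrier)
  then consider "c (0,1) = 0" | "c (0,1) = 1" by blast
  then show ?thesis
  proof cases
    case 1
    then show ?thesis using that[OF id_iso] c_eq by (simp add: lambdaD_def)
  next
    case 2
    then show ?thesis
      using that[OF dihedral8_shear_iso] c_eq by (simp add: lambdaD_def dihedral8_shear_def mod_mod_cancel)
  qed
qed

lemma cyclic4_char:
  assumes c: "c \<in> hom cyclic4 (integer_mod_group 2)" and c1: "c 1 = 1" and u: "u \<in> carrier cyclic4"
  shows "c u = etaC u"
proof -
  have cm: "c ((v + w) mod 4) = (c v + c w) mod 2" if "v \<in> carrier cyclic4" "w \<in> carrier cyclic4" for v w
    using hom_mult[OF c that] by simp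
  have c0: "c 0 = 0" using hom_one[OF c] by simp
  have c2: "c 2 = 0" using cm[of 1 1] c1 by (simp add: cyclic4_carrier)
  have c3: "c 3 = 1" using cm[of 2 1] c1 c2 by (simp add: cyclic4_carrier)
  show ?thesis using u c0 c1 c2 c3 by (auto simp: cyclic4_carrier etaC_def)
qed

lemma pullback_carrier:
  "carrier (pullback G H l e) = {(u, v). u \<in> carrier G \<and> v \<in> carrier H \<and> l u = e v}"
  and pullback_mult:
  "(u, v) \<otimes>\<^bsub>pullback G H l e\<^esub> (u', v') = (u \<otimes>\<^bsub>G\<^esub> u', v \<otimes>\<^bsub>H\<^esub> v')"
  by (simp_all add: pullback_def)

section \<open>A cyclic quartic extension containing a square root\<close>

locale cyclic_quartic =
  fixes F C :: "'a::field set" and \<alpha> :: 'a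
  assumes galois: "galois F C"
    and gal_cyclic: "gal_group C F \<cong> cyclic4"
    and two_neq_zero: "(2::'a) \<noteq> 0"
    and alpha_in: "\<alpha> \<in> C" and alpha_sq: "\<alpha> * \<alpha> \<in> F" and alpha_notin: "\<alpha> \<notin> F"
begin

lemma subfield_base: "is_subfield F" and subfield_top: "is_subfield C"
  and base_subset: "F \<subseteq> C" and fixed_field_eq: "fixed_field C F = F"
  using galois by (auto simp: galois_def)

definition \<psi> :: "('a \<Rightarrow> 'a) \<Rightarrow> int" where
  "\<psi> = (SOME h. h \<in> iso (gal_group C F) cyclic4)"

definition rot :: "int \<Rightarrow> 'a \<Rightarrow> 'a" where
  "rot = inv_into (carrier (gal_group C F)) \<psi>"

lemma psi_iso: "\<psi> \<in> iso (gal_group C F) cyclic4"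
  unfolding \<psi>_def using gal_cyclic by (simp add: is_iso_def some_in_eq)

lemma rot_iso: "rot \<in> iso cyclic4 (gal_group C F)"
  unfolding rot_def using group.iso_set_sym[OF group_gal_group[OF subfield_top] psi_iso] .

lemma psi_bij: "bij_betw \<psi> (carrier (gal_group C F)) (carrier cyclic4)"
  using psi_iso by (simp add: iso_def)

lemma finite_gal: "finite (carrier (gal_group C F))"
  using bij_betw_finite[OF psi_bij] by (simp add: cyclic4_carrier)

lemma rot_psi: "t \<in> carrier (gal_group C F) \<Longrightarrow> rot (\<psi> t) = t"
  unfolding rot_def using psi_bij by (rule bij_betw_inv_into_left)

lemma psi_rot: "k \<in> carrier cyclic4 \<Longrightarrow> \<psi> (rot k) = k"
  unfolding rot_def using psi_bij by (rule bij_betw_inv_into_right)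

lemma rot_closed: "k \<in> carrier cyclic4 \<Longrightarrow> rot k \<in> carrier (gal_group C F)"
  using hom_in_carrier[OF iso_imp_homomorphism[OF rot_iso]] .

lemma rot_add: "k \<in> carrier cyclic4 \<Longrightarrow> l \<in> carrier cyclic4 \<Longrightarrow> rot ((k + l) mod 4) = rot k \<circ> rot l"
  using hom_mult[OF iso_imp_homomorphism[OF rot_iso]] by simp

lemma rot_zero: "rot 0 = id"
  using hom_one[OF iso_imp_homomorphism[OF rot_iso] group_integer_mod_group
      group_gal_group[OF subfield_top]] by simp

definition \<tau> :: "'a \<Rightarrow> 'a" where "\<tau> = rot 1"
definition \<rho> :: "'a \<Rightarrow> 'a" where "\<rho> = rot 2"

lemma tau_gal: "\<tau> \<in> carrier (gal_group C F)" and rho_gal: "\<rho> \<in> carrier (gal_group C F)"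
  unfolding \<tau>_def \<rho>_def by (simp_all add: rot_closed cyclic4_carrier)

lemma rho_eq: "\<rho> = \<tau> \<circ> \<tau>" and rho_rho: "\<rho> \<circ> \<rho> = id"
  using rot_add[of 1 1] rot_add[of 2 2] rot_zero by (simp_all add: \<tau>_def \<rho>_def cyclic4_carrier)

lemma rho_neq_id: "\<rho> \<noteq> id"
  using psi_rot[of 2] psi_rot[of 0] rot_zero by (auto simp: \<rho>_def cyclic4_carrier)

lemma gal_cases:
  assumes "t \<in> carrier (gal_group C F)"
  shows "t = id \<or> t = \<tau> \<or> t = \<rho> \<or> t = \<tau> \<circ> \<rho>"
proof -
  have "\<psi> t \<in> {0,1,2,3}" using hom_in_carrier[OF iso_imp_homomorphism[OF psi_iso] assms]
    by (simp add: cyclic4_carrier)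
  moreover have "rot 3 = \<tau> \<circ> \<rho>" using rot_add[of 1 2] by (simp add: \<tau>_def \<rho>_def cyclic4_carrier)
  ultimately show ?thesis using rot_psi[OF assms] rot_zero by (auto simp: \<tau>_def \<rho>_def)
qed

lemma tau_fixed_imp_base:
  assumes x: "x \<in> C" and "\<tau> x = x"
  shows "x \<in> F"
proof -
  have "t x = x" if "t \<in> carrier (gal_group C F)" for t
    using gal_cases[OF that] \<open>\<tau> x = x\<close> rho_eq by auto
  then show ?thesis using x fixed_field_eq by (auto simp: fixed_field_def)
qed

lemma tau_alpha: "\<tau> \<alpha> = - \<alpha>"
  using gal_group_sqrt_cases[OF subfield_top tau_gal alpha_in alpha_sq]
    tau_fixed_imp_base[OF alpha_in] alpha_notin by blast

lemma rho_alpha: "\<rho> \<alpha> = \<alpha>"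
  using field_hom_on_uminus[OF subfield_top gal_group_field_hom_on[OF tau_gal] alpha_in]
  by (simp add: rho_eq tau_alpha)

lemma alpha_neq_zero: "\<alpha> \<noteq> 0"
  using alpha_notin subfield_zero[OF subfield_base] by blast

lemma rho_fixed_imp_quad_ext:
  assumes m: "m \<in> C" "\<rho> m = m"
  shows "m \<in> quad_ext F \<alpha>"
proof -
  have "\<tau> (\<tau> m) = m" using m(2) by (simp add: rho_eq)
  then obtain m0 m1 where "m0 \<in> C" "m1 \<in> C" "\<tau> m0 = m0" "\<tau> m1 = m1" and m_eq: "m = m0 + m1 * \<alpha>"
    using gal_group_involution_decomp[OF subfield_top tau_gal two_neq_zero m(1) _ alpha_in
        alpha_neq_zero tau_alpha] by blast
  then have "m0 \<in> F" "m1 \<in> F" using tau_fixed_imp_base by blast+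
  then show ?thesis unfolding m_eq by (rule quad_extI)
qed

lemma quad_ext_alpha_subset: "quad_ext F \<alpha> \<subseteq> C"
  using quad_ext_subset[OF subfield_top base_subset alpha_in] .

lemma subfield_quad_ext_alpha: "is_subfield (quad_ext F \<alpha>)"
  using subfield_quad_ext[OF subfield_base alpha_sq] .

definition \<gamma> :: 'a where
  "\<gamma> = (SOME g. g \<in> C \<and> g \<noteq> 0 \<and> \<rho> g = - g)"

lemma gamma: "\<gamma> \<in> C" "\<gamma> \<noteq> 0" "\<rho> \<gamma> = - \<gamma>"
proof -
  obtain y where y: "\<rho> y \<noteq> y" using rho_neq_id by (auto simp: fun_eq_iff)
  then have yC: "y \<in> C" using gal_group_outside[OF rho_gal] by blast
  have "\<rho> (\<rho> y) = y" using rho_rho by (simp add: fun_eq_iff)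
  then have "\<rho> (y - \<rho> y) = - (y - \<rho> y)"
    using field_hom_on_diff[OF subfield_top gal_group_field_hom_on[OF rho_gal] yC
        gal_group_closed[OF rho_gal yC]] by simp
  moreover have "y - \<rho> y \<in> C" using yC gal_group_closed[OF rho_gal yC] subfield_top
    by (simp add: subfield_diff)
  ultimately have "\<exists>g. g \<in> C \<and> g \<noteq> 0 \<and> \<rho> g = - g" using y by (intro exI[of _ "y - \<rho> y"]) simp
  then have "\<gamma> \<in> C \<and> \<gamma> \<noteq> 0 \<and> \<rho> \<gamma> = - \<gamma>" unfolding \<gamma>_def by (rule someI_ex)
  then show "\<gamma> \<in> C" "\<gamma> \<noteq> 0" "\<rho> \<gamma> = - \<gamma>" by blast+
qed

lemma gamma_sq: "\<gamma> * \<gamma> \<in> quad_ext F \<alpha>"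
proof (rule rho_fixed_imp_quad_ext)
  show "\<gamma> * \<gamma> \<in> C" using gamma subfield_top by (simp add: subfield_mult)
  show "\<rho> (\<gamma> * \<gamma>) = \<gamma> * \<gamma>"
    using field_hom_on_mult[OF gal_group_field_hom_on[OF rho_gal] gamma(1) gamma(1)]
    by (simp add: gamma(3))
qed

lemma eq_quad_ext_gamma: "C = quad_ext (quad_ext F \<alpha>) \<gamma>"
proof
  show "C \<subseteq> quad_ext (quad_ext F \<alpha>) \<gamma>"
  proof
    fix z assume z: "z \<in> C"
    have "\<rho> (\<rho> z) = z" using rho_rho by (simp add: fun_eq_iff)
    then obtain z0 z1 where "z0 \<in> C" "z1 \<in> C" "\<rho> z0 = z0" "\<rho> z1 = z1" and z_eq: "z = z0 + z1 * \<gamma>"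
      using gal_group_involution_decomp[OF subfield_top rho_gal two_neq_zero z _ gamma] by blast
    then have "z0 \<in> quad_ext F \<alpha>" "z1 \<in> quad_ext F \<alpha>" using rho_fixed_imp_quad_ext by blast+
    then show "z \<in> quad_ext (quad_ext F \<alpha>) \<gamma>" unfolding z_eq by (rule quad_extI)
  qed
  show "quad_ext (quad_ext F \<alpha>) \<gamma> \<subseteq> C"
    using quad_ext_subset[OF subfield_top quad_ext_alpha_subset gamma(1)] .
qed

lemma etaC_psi: "t \<in> carrier (gal_group C F) \<Longrightarrow> etaC (\<psi> t) = sign_char \<alpha> t"
proof -
  assume t: "t \<in> carrier (gal_group C F)"
  have alpha_neq: "\<alpha> \<noteq> - \<alpha>" using neq_uminus_self[OF two_neq_zero alpha_neq_zero] .
  have "sign_char \<alpha> \<circ> rot \<in> hom cyclic4 (integer_mod_group 2)"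
    using hom_compose[OF iso_imp_homomorphism[OF rot_iso]
        sign_char_hom[OF subfield_top alpha_in alpha_sq alpha_neq]] .
  moreover have "(sign_char \<alpha> \<circ> rot) 1 = 1"
    using tau_alpha alpha_neq by (simp add: sign_char_def \<tau>_def)
  moreover have "\<psi> t \<in> carrier cyclic4"
    using hom_in_carrier[OF iso_imp_homomorphism[OF psi_iso] t] .
  ultimately have "(sign_char \<alpha> \<circ> rot) (\<psi> t) = etaC (\<psi> t)" by (rule cyclic4_char)
  then show ?thesis using rot_psi[OF t] by simp
qed

end

section \<open>A dihedral extension containing two square roots\<close>

lemma gal_group_antimono: "F \<subseteq> E \<Longrightarrow> carrier (gal_group K E) \<subseteq> carrier (gal_group K F)"
  unfolding subset_iff gal_group_carrier_iff by blast

lemma iso_one_dihedral8: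
  assumes h: "h \<in> iso (gal_group K F) dihedral8"
  shows "h id = (0,0)"
proof (rule dihedral8_idem)
  show "h id \<in> carrier dihedral8" using hom_in_carrier[OF iso_imp_homomorphism[OF h] gal_group_id] .
  show "h id \<otimes>\<^bsub>dihedral8\<^esub> h id = h id"
    using hom_mult[OF iso_imp_homomorphism[OF h] gal_group_id gal_group_id] by simp
qed

lemma gal_group_cyclic4_generator:
  assumes K: "is_subfield K" and iso: "gal_group K E \<cong> cyclic4"
  obtains \<omega> where "\<omega> \<in> carrier (gal_group K E)" "\<omega> \<circ> \<omega> \<noteq> id"
proof -
  obtain h where h: "h \<in> iso cyclic4 (gal_group K E)"
    using iso group.iso_sym[OF group_gal_group[OF K]] by (auto simp: is_iso_def)
  have one: "(1::int) \<in> carrier cyclic4" and two: "(2::int) \<in> carrier cyclic4"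
    by (simp_all add: cyclic4_carrier)
  have "h 1 \<circ> h 1 = h 2" using hom_mult[OF iso_imp_homomorphism[OF h] one one] by simp
  moreover have "h 2 \<noteq> h 0"
    using h two by (auto simp: iso_def bij_betw_def cyclic4_carrier dest: inj_onD)
  moreover have "h 0 = id"
    using hom_one[OF iso_imp_homomorphism[OF h] group_integer_mod_group group_gal_group[OF K]]
    by simp
  ultimately show ?thesis using that hom_in_carrier[OF iso_imp_homomorphism[OF h] one] by metis
qed

locale dihedral_biquadratic =
  fixes F D :: "'a::field set" and \<alpha> \<beta> :: 'a
  assumes galois: "galois F D"
    and gal_dihedral: "gal_group D F \<cong> dihedral8"
    and gal_cyclic_over: "gal_group D (adjoin F {\<alpha> * \<beta>}) \<cong> cyclic4"
    and two_neq_zero: "(2::'a) \<noteq> 0"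
    and in_top: "\<alpha> \<in> D" "\<beta> \<in> D"
    and squares: "\<alpha> * \<alpha> \<in> F" "\<beta> * \<beta> \<in> F"
    and notin_base: "\<alpha> \<notin> F" "\<beta> \<notin> F" "\<alpha> * \<beta> \<notin> F"
begin

lemma subfield_base: "is_subfield F" and subfield_top: "is_subfield D"
  and base_subset: "F \<subseteq> D" and fixed_field_eq: "fixed_field D F = F"
  using galois by (auto simp: galois_def)

lemma finite_gal: "finite (carrier (gal_group D F))"
  using iso_finite[OF gal_dihedral] by (simp add: dihedral8_carrier)

lemma alpha_beta_in: "\<alpha> * \<beta> \<in> D"
  using in_top subfield_top by (simp add: subfield_mult)

lemma alpha_beta_sq: "(\<alpha> * \<beta>) * (\<alpha> * \<beta>) \<in> F"
proof -
  have eq: "(\<alpha> * \<beta>) * (\<alpha> * \<beta>) = (\<alpha> * \<alpha>) * (\<beta> * \<beta>)" by (simp add: ac_simps)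
  show ?thesis unfolding eq using subfield_base squares by (rule subfield_mult)
qed

lemma neq_uminus: "\<alpha> \<noteq> - \<alpha>" "\<beta> \<noteq> - \<beta>" "\<alpha> * \<beta> \<noteq> - (\<alpha> * \<beta>)"
  using neq_uminus_self[OF two_neq_zero] notin_base subfield_zero[OF subfield_base]
  by metis+

context
  fixes \<phi> :: "('a \<Rightarrow> 'a) \<Rightarrow> int \<times> int"
  assumes \<phi>: "\<phi> \<in> iso (gal_group D F) dihedral8"
begin

definition char_of :: "'a \<Rightarrow> int \<times> int \<Rightarrow> int" where
  "char_of x = sign_char x \<circ> inv_into (carrier (gal_group D F)) \<phi>"

lemma inv_iso: "inv_into (carrier (gal_group D F)) \<phi> \<in> iso dihedral8 (gal_group D F)"
  using group.iso_set_sym[OF group_gal_group[OF subfield_top] \<phi>] .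

lemma char_of_hom:
  "x \<in> D \<Longrightarrow> x * x \<in> F \<Longrightarrow> x \<noteq> - x \<Longrightarrow> char_of x \<in> hom dihedral8 (integer_mod_group 2)"
  unfolding char_of_def
  using hom_compose[OF iso_imp_homomorphism[OF inv_iso] sign_char_hom[OF subfield_top]] by blast

lemma char_of_apply: "s \<in> carrier (gal_group D F) \<Longrightarrow> char_of x (\<phi> s) = sign_char x s"
  using bij_betw_inv_into_left[of \<phi> "carrier (gal_group D F)" "carrier dihedral8" s] \<phi>
  by (simp add: char_of_def iso_def)

lemma char_of_formula:
  "x \<in> D \<Longrightarrow> x * x \<in> F \<Longrightarrow> x \<noteq> - x \<Longrightarrow> u \<in> carrier dihedral8 \<Longrightarrow>
    char_of x u = (char_of x (1,0) * fst u + char_of x (0,1) * snd u) mod 2"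
  using dihedral8_char[OF char_of_hom] by blast

lemma char_of_values:
  "x \<in> D \<Longrightarrow> x * x \<in> F \<Longrightarrow> x \<noteq> - x \<Longrightarrow> char_of x (1,0) \<in> {0,1} \<and> char_of x (0,1) \<in> {0,1}"
  using hom_in_carrier[OF char_of_hom] integer_mod_group_2_carrier by (simp add: dihedral8_carrier)

lemma char_of_nontrivial:
  assumes x: "x \<in> D" "x * x \<in> F" "x \<noteq> - x" "x \<notin> F"
  shows "char_of x (1,0) = 1 \<or> char_of x (0,1) = 1"
proof -
  obtain s where s: "s \<in> carrier (gal_group D F)" "sign_char x s = 1"
    using sign_char_nontrivial[OF galois x(1,4)] by blast
  then have "char_of x (\<phi> s) = 1" by (simp add: char_of_apply)
  then show ?thesis
    using char_of_formula[OF x(1-3) hom_in_carrier[OF iso_imp_homomorphism[OF \<phi>] s(1)]]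
      char_of_values[OF x(1-3)] by auto
qed

lemma char_of_mult: "u \<in> carrier dihedral8 \<Longrightarrow>
    char_of (\<alpha> * \<beta>) u = (char_of \<alpha> u + char_of \<beta> u) mod 2"
  unfolding char_of_def
  using sign_char_mult[OF subfield_top hom_in_carrier[OF iso_imp_homomorphism[OF inv_iso]]
      in_top squares neq_uminus] by simp

text \<open>A generator of \<open>Gal(D/F(\<alpha>\<beta>))\<close> fixes \<open>\<alpha>\<beta>\<close> and corresponds to a rotation of order four.\<close>
lemma char_of_alpha_beta_rotation: "char_of (\<alpha> * \<beta>) (1,0) = 0"
proof -
  obtain \<omega> where \<omega>: "\<omega> \<in> carrier (gal_group D (adjoin F {\<alpha> * \<beta>}))" "\<omega> \<circ> \<omega> \<noteq> id"
    using gal_group_cyclic4_generator[OF subfield_top gal_cyclic_over] by blast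
  have \<omega>_gal: "\<omega> \<in> carrier (gal_group D F)"
    using \<omega>(1) gal_group_antimono[of F "adjoin F {\<alpha> * \<beta>}"] adjoin_upper by blast
  have "\<omega> (\<alpha> * \<beta>) = \<alpha> * \<beta>" using gal_group_fixes[OF \<omega>(1)] adjoin_upper by blast
  then have "char_of (\<alpha> * \<beta>) (\<phi> \<omega>) = 0" by (simp add: char_of_apply[OF \<omega>_gal] sign_char_def)
  moreover have "\<phi> \<omega> = (1,0) \<or> \<phi> \<omega> = (3,0)"
  proof (rule dihedral8_order_four)
    show \<phi>\<omega>: "\<phi> \<omega> \<in> carrier dihedral8" using hom_in_carrier[OF iso_imp_homomorphism[OF \<phi>] \<omega>_gal] .
    have "\<phi> (\<omega> \<circ> \<omega>) \<noteq> \<phi> id"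
      using \<phi> \<omega>(2) gal_group_comp[OF \<omega>_gal \<omega>_gal] gal_group_id
      by (auto simp: iso_def bij_betw_def dest: inj_onD)
    then show "\<phi> \<omega> \<otimes>\<^bsub>dihedral8\<^esub> \<phi> \<omega> \<noteq> (0,0)"
      using hom_mult[OF iso_imp_homomorphism[OF \<phi>] \<omega>_gal \<omega>_gal] iso_one_dihedral8[OF \<phi>]
      by simp
  qed
  moreover have "char_of (\<alpha> * \<beta>) (1,0) \<in> {0,1}"
    using char_of_values[OF alpha_beta_in alpha_beta_sq neq_uminus(3)] by blast
  ultimately show ?thesis
    using char_of_formula[OF alpha_beta_in alpha_beta_sq neq_uminus(3), of "(3,0)"]
    by (auto simp: dihedral8_carrier)
qed

lemma char_of_alpha_rotation: "char_of \<alpha> (1,0) = 1"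
proof (rule ccontr)
  assume a1: "char_of \<alpha> (1,0) \<noteq> 1"
  have ab: "char_of (\<alpha> * \<beta>) u = (char_of \<alpha> u + char_of \<beta> u) mod 2" if "u \<in> {(1,0), (0,1)}" for u
    using char_of_mult that by (auto simp: dihedral8_carrier)
  have va: "char_of \<alpha> (1,0) \<in> {0,1}" "char_of \<alpha> (0,1) \<in> {0,1}"
    using char_of_values[OF in_top(1) squares(1) neq_uminus(1)] by auto
  have vb: "char_of \<beta> (1,0) \<in> {0,1}" "char_of \<beta> (0,1) \<in> {0,1}"
    using char_of_values[OF in_top(2) squares(2) neq_uminus(2)] by auto
  have "char_of \<alpha> (1,0) = 0" "char_of \<beta> (1,0) = 0"
    using a1 va vb ab[of "(1,0)"] char_of_alpha_beta_rotation by auto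
  moreover have "char_of \<alpha> (0,1) = 1" "char_of \<beta> (0,1) = 1"
    using calculation char_of_nontrivial[OF in_top(1) squares(1) neq_uminus(1) notin_base(1)]
      char_of_nontrivial[OF in_top(2) squares(2) neq_uminus(2) notin_base(2)] by auto
  ultimately have "char_of (\<alpha> * \<beta>) (1,0) = 0" "char_of (\<alpha> * \<beta>) (0,1) = 0"
    using ab[of "(1,0)"] ab[of "(0,1)"] by simp_all
  then show False
    using char_of_nontrivial[OF alpha_beta_in alpha_beta_sq neq_uminus(3) notin_base(3)] by simp
qed

end

lemma iso_lambdaD_sign_char:
  obtains \<phi> where "\<phi> \<in> iso (gal_group D F) dihedral8"
    "\<And>s. s \<in> carrier (gal_group D F) \<Longrightarrow> lambdaD (\<phi> s) = sign_char \<alpha> s"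
proof -
  obtain \<phi>0 where \<phi>0: "\<phi>0 \<in> iso (gal_group D F) dihedral8"
    using gal_dihedral by (auto simp: is_iso_def)
  obtain \<theta> where \<theta>: "\<theta> \<in> iso dihedral8 dihedral8"
    "\<And>u. u \<in> carrier dihedral8 \<Longrightarrow> lambdaD (\<theta> u) = char_of \<phi>0 \<alpha> u"
    using dihedral8_char_relabel[OF char_of_hom[OF \<phi>0 in_top(1) squares(1) neq_uminus(1)]
        char_of_alpha_rotation[OF \<phi>0]] by blast
  show ?thesis
  proof (rule that)
    show "\<theta> \<circ> \<phi>0 \<in> iso (gal_group D F) dihedral8" using iso_set_trans[OF \<phi>0 \<theta>(1)] .
    fix s assume "s \<in> carrier (gal_group D F)"
    then show "lambdaD ((\<theta> \<circ> \<phi>0) s) = sign_char \<alpha> s"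
      using \<theta>(2) hom_in_carrier[OF iso_imp_homomorphism[OF \<phi>0]] char_of_apply[OF \<phi>0] by simp
  qed
qed

end

section \<open>Extending automorphisms to a quadratic extension\<close>

lemma gal_group_base_linear:
  assumes L: "is_subfield L" and FL: "F \<subseteq> L" and s: "s \<in> carrier (gal_group L F)" and y: "y \<in> L"
    and uv: "u \<in> F" "v \<in> F"
  shows "s (u + v * y) = u + v * s y"
proof -
  have hom: "field_hom_on L s" using gal_group_field_hom_on[OF s] .
  have uvL: "u \<in> L" "v \<in> L" using uv FL by auto
  have "s (u + v * y) = s u + s v * s y"
    using field_hom_on_add[OF hom uvL(1)] field_hom_on_mult[OF hom uvL(2) y] uvL y L
    by (simp add: subfield_mult)
  then show ?thesis using gal_group_fixes[OF s] uv by simp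
qed

definition quad_coords :: "'a::field set \<Rightarrow> 'a \<Rightarrow> 'a \<Rightarrow> 'a \<times> 'a" where
  "quad_coords D y x = (SOME (u, v). u \<in> D \<and> v \<in> D \<and> x = u + v * y)"

lemma quad_coords_eq:
  assumes D: "is_subfield D" and y: "y \<notin> D" and uv: "u \<in> D" "v \<in> D"
  shows "quad_coords D y (u + v * y) = (u, v)"
proof -
  have "\<exists>p. (case p of (u', v') \<Rightarrow> u' \<in> D \<and> v' \<in> D \<and> u + v * y = u' + v' * y)"
    using uv by blast
  then have "case quad_coords D y (u + v * y) of (u', v') \<Rightarrow> u' \<in> D \<and> v' \<in> D \<and> u + v * y = u' + v' * y"
    unfolding quad_coords_def by (rule someI_ex)
  then show ?thesis using quad_ext_coords_unique[OF D y uv] by (auto split: prod.splits)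
qed

definition quad_ext_extend :: "'a::field set \<Rightarrow> 'a \<Rightarrow> ('a \<Rightarrow> 'a) \<Rightarrow> 'a \<Rightarrow> 'a \<Rightarrow> 'a" where
  "quad_ext_extend D y s g x =
     (if x \<in> quad_ext D y then s (fst (quad_coords D y x)) + s (snd (quad_coords D y x)) * g else x)"

lemma quad_ext_extend_apply:
  assumes "is_subfield D" "y \<notin> D" "u \<in> D" "v \<in> D"
  shows "quad_ext_extend D y s g (u + v * y) = s u + s v * g"
  using assms by (simp add: quad_ext_extend_def quad_coords_eq quad_extI)

lemma field_hom_on_quad_ext_extend:
  assumes D: "is_subfield D" and y: "y \<notin> D" and yy: "y * y \<in> D"
    and s: "field_hom_on D s" and gg: "g * g = s (y * y)"
  shows "field_hom_on (quad_ext D y) (quad_ext_extend D y s g)"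
  unfolding field_hom_on_def
proof (intro ballI conjI)
  let ?\<sigma> = "quad_ext_extend D y s g"
  fix x z assume "x \<in> quad_ext D y" "z \<in> quad_ext D y"
  then obtain u v u' v' where uv: "u \<in> D" "v \<in> D" "x = u + v * y" "u' \<in> D" "v' \<in> D" "z = u' + v' * y"
    by (meson quad_extE)
  have sum_eq: "x + z = (u + u') + (v + v') * y" using uv by (simp add: algebra_simps)
  have "?\<sigma> (x + z) = s (u + u') + s (v + v') * g"
    unfolding sum_eq using uv(1,2,4,5) D by (simp add: quad_ext_extend_apply[OF D y] subfield_add)
  also have "\<dots> = ?\<sigma> x + ?\<sigma> z"
    using uv by (simp add: quad_ext_extend_apply[OF D y] field_hom_on_add[OF s] algebra_simps)
  finally show "?\<sigma> (x + z) = ?\<sigma> x + ?\<sigma> z" .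
  have prod_eq: "x * z = (u * u' + v * v' * (y * y)) + (u * v' + v * u') * y"
    using uv by (simp add: algebra_simps)
  have "?\<sigma> (x * z) = s (u * u' + v * v' * (y * y)) + s (u * v' + v * u') * g"
    unfolding prod_eq using uv(1,2,4,5) D yy
    by (simp add: quad_ext_extend_apply[OF D y] subfield_add subfield_mult)
  also have "\<dots> = s u * s u' + s v * s v' * (g * g) + (s u * s v' + s v * s u') * g"
    using uv D yy by (simp add: field_hom_on_add[OF s] field_hom_on_mult[OF s] subfield_add
        subfield_mult gg)
  also have "\<dots> = ?\<sigma> x * ?\<sigma> z"
    using uv by (simp add: quad_ext_extend_apply[OF D y] algebra_simps)
  finally show "?\<sigma> (x * z) = ?\<sigma> x * ?\<sigma> z" .
qed

lemma field_hom_on_quad_ext_onto: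
  assumes D: "is_subfield D" and K: "is_subfield (quad_ext D y)" and hom: "field_hom_on (quad_ext D y) \<sigma>"
    and maps: "\<sigma> ` quad_ext D y \<subseteq> quad_ext D y" and D_onto: "D \<subseteq> \<sigma> ` D"
    and y_hit: "y \<in> \<sigma> ` quad_ext D y"
  shows "\<sigma> ` quad_ext D y = quad_ext D y"
proof
  show "quad_ext D y \<subseteq> \<sigma> ` quad_ext D y"
  proof
    fix x assume "x \<in> quad_ext D y"
    then obtain u v where uv: "u \<in> D" "v \<in> D" "x = u + v * y" by (rule quad_extE)
    obtain u' v' where u': "u' \<in> D" "\<sigma> u' = u" and v': "v' \<in> D" "\<sigma> v' = v"
      using uv(1,2) D_onto by blast
    obtain g where g: "g \<in> quad_ext D y" "\<sigma> g = y" using y_hit by blast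
    have "u' \<in> quad_ext D y" "v' \<in> quad_ext D y" using u' v' subset_quad_ext[OF D] by auto
    then have "\<sigma> (u' + v' * g) = x" "u' + v' * g \<in> quad_ext D y"
      using field_hom_on_add[OF hom] field_hom_on_mult[OF hom] K g u' v' uv(3)
      by (simp_all add: subfield_add subfield_mult)
    then show "x \<in> \<sigma> ` quad_ext D y" by (metis image_eqI)
  qed
qed (rule maps)

lemma quad_ext_extend_on_base:
  assumes D: "is_subfield D" and y: "y \<notin> D" and s: "field_hom_on D s" and x: "x \<in> D"
  shows "quad_ext_extend D y s g x = s x"
  using quad_ext_extend_apply[OF D y x subfield_zero[OF D]] field_hom_on_zero[OF D s] by simp

lemma quad_ext_extend_on_subext:
  assumes D: "is_subfield D" and y: "y \<notin> D" and M: "is_subfield M" and MD: "M \<subseteq> D"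
    and yy: "y * y \<in> M" and t: "field_hom_on (quad_ext M y) t"
    and agree: "\<And>x. x \<in> M \<Longrightarrow> s x = t x" and z: "z \<in> quad_ext M y"
  shows "quad_ext_extend D y s (t y) z = t z"
proof -
  obtain m0 m1 where m: "m0 \<in> M" "m1 \<in> M" "z = m0 + m1 * y" using z by (rule quad_extE)
  have C: "is_subfield (quad_ext M y)" using subfield_quad_ext[OF M yy] .
  have "m0 \<in> quad_ext M y" "m1 \<in> quad_ext M y" "y \<in> quad_ext M y"
    using m subset_quad_ext[OF M] generator_in_quad_ext[OF M] by auto
  then have "t z = t m0 + t m1 * t y"
    using m(3) C field_hom_on_add[OF t] field_hom_on_mult[OF t] by (simp add: subfield_mult)
  moreover have "m0 \<in> D" "m1 \<in> D" using m MD by auto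
  then have "quad_ext_extend D y s (t y) z = s m0 + s m1 * t y"
    using quad_ext_extend_apply[OF D y] m(3) by simp
  ultimately show ?thesis using agree m by simp
qed

lemma quad_ext_extend_maps:
  assumes D: "is_subfield D" and y: "y \<notin> D" and yy: "y * y \<in> D"
    and s: "\<And>x. x \<in> D \<Longrightarrow> s x \<in> D" and g: "g \<in> quad_ext D y"
  shows "quad_ext_extend D y s g ` quad_ext D y \<subseteq> quad_ext D y"
proof
  fix z assume "z \<in> quad_ext_extend D y s g ` quad_ext D y"
  then obtain x where x: "x \<in> quad_ext D y" and z: "z = quad_ext_extend D y s g x" by blast
  obtain u v where uv: "u \<in> D" "v \<in> D" "x = u + v * y" using x by (rule quad_extE)
  have "s u \<in> quad_ext D y" "s v \<in> quad_ext D y" using uv s subset_quad_ext[OF D] by blast+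
  then show "z \<in> quad_ext D y"
    using z uv quad_ext_extend_apply[OF D y uv(1,2)] g subfield_quad_ext[OF D yy]
    by (simp add: subfield_add subfield_mult)
qed

lemma gal_group_quad_ext_glue:
  assumes D: "is_subfield D" and M: "is_subfield M" and MD: "M \<subseteq> D" and FD: "F \<subseteq> D"
    and y: "y \<notin> D" and yy: "y * y \<in> M" and C: "C = quad_ext M y"
    and s: "s \<in> carrier (gal_group D F)" and t: "t \<in> carrier (gal_group C F)"
    and agree: "\<And>x. x \<in> M \<Longrightarrow> s x = t x"
  obtains \<sigma> where "\<sigma> \<in> carrier (gal_group (quad_ext D y) F)"
    "\<And>x. x \<in> D \<Longrightarrow> \<sigma> x = s x" "\<And>x. x \<in> C \<Longrightarrow> \<sigma> x = t x"
proof -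
  let ?K = "quad_ext D y"
  define \<sigma> where "\<sigma> = quad_ext_extend D y s (t y)"
  have yC: "y \<in> C" using C generator_in_quad_ext[OF M] by simp
  have yyD: "y * y \<in> D" using yy MD by blast
  have K: "is_subfield ?K" using subfield_quad_ext[OF D yyD] .
  have CK: "C \<subseteq> ?K" using C quad_ext_mono[OF MD] by simp
  have hs: "field_hom_on D s" and ht: "field_hom_on C t"
    using s t gal_group_field_hom_on by blast+
  have hom: "field_hom_on ?K \<sigma>"
    using field_hom_on_quad_ext_extend[OF D y yyD hs] field_hom_on_mult[OF ht yC yC] agree[OF yy]
    by (simp add: \<sigma>_def)
  have on_D: "\<sigma> x = s x" if "x \<in> D" for x
    unfolding \<sigma>_def using quad_ext_extend_on_base[OF D y hs that] .
  have on_C: "\<sigma> z = t z" if "z \<in> C" for z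
    unfolding \<sigma>_def using quad_ext_extend_on_subext[OF D y M MD yy ht[unfolded C] agree] that C by simp
  have maps: "\<sigma> ` ?K \<subseteq> ?K"
    unfolding \<sigma>_def using gal_group_closed[OF t yC] CK
    by (intro quad_ext_extend_maps[OF D y yyD] gal_group_closed[OF s]) auto
  have D_onto: "D \<subseteq> \<sigma> ` D"
    using on_D gal_group_bij_betw[OF s] by (auto simp: bij_betw_def image_iff)
  have y_hit: "y \<in> \<sigma> ` ?K"
  proof -
    obtain g where "g \<in> C" "t g = y"
      using yC gal_group_bij_betw[OF t] by (metis bij_betw_imp_surj_on imageE)
    then show ?thesis using on_C CK by (metis image_eqI subsetD)
  qed
  have one: "\<sigma> 1 = 1"
    using on_D[OF subfield_one[OF D]] field_hom_on_one[OF D hs gal_group_inj_on[OF s]] by simp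
  have fixes_F: "\<sigma> x = x" if "x \<in> F" for x using that FD on_D gal_group_fixes[OF s] by auto
  have outside: "\<sigma> x = x" if "x \<notin> ?K" for x using that by (simp add: \<sigma>_def quad_ext_extend_def)
  have "\<sigma> \<in> carrier (gal_group ?K F)"
    using gal_group_carrierI[OF K hom one field_hom_on_quad_ext_onto[OF D K hom maps D_onto y_hit]
        fixes_F outside] .
  then show ?thesis using that on_D on_C by blast
qed

lemma gal_group_quad_ext_apply:
  assumes D: "is_subfield D" and yy: "y * y \<in> D" and \<sigma>: "\<sigma> \<in> carrier (gal_group (quad_ext D y) F)"
    and uv: "u \<in> D" "v \<in> D"
  shows "\<sigma> (u + v * y) = \<sigma> u + \<sigma> v * \<sigma> y"
proof -
  have K: "is_subfield (quad_ext D y)" using subfield_quad_ext[OF D yy] .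
  have "u \<in> quad_ext D y" "v \<in> quad_ext D y" "y \<in> quad_ext D y"
    using uv subset_quad_ext[OF D] generator_in_quad_ext[OF D] by auto
  then show ?thesis
    using field_hom_on_add[OF gal_group_field_hom_on[OF \<sigma>]]
      field_hom_on_mult[OF gal_group_field_hom_on[OF \<sigma>]] K by (simp add: subfield_mult)
qed

lemma gal_group_quad_ext_eqI:
  assumes D: "is_subfield D" and yy: "y * y \<in> D"
    and \<sigma>: "\<sigma> \<in> carrier (gal_group (quad_ext D y) F)"
    and \<sigma>': "\<sigma>' \<in> carrier (gal_group (quad_ext D y) F)"
    and on_D: "\<And>x. x \<in> D \<Longrightarrow> \<sigma> x = \<sigma>' x" and on_y: "\<sigma> y = \<sigma>' y"
  shows "\<sigma> = \<sigma>'"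
proof (rule gal_group_eqI[OF \<sigma> \<sigma>'])
  fix x assume "x \<in> quad_ext D y"
  then obtain u v where "u \<in> D" "v \<in> D" "x = u + v * y" by (rule quad_extE)
  then show "\<sigma> x = \<sigma>' x"
    using gal_group_quad_ext_apply[OF D yy \<sigma>] gal_group_quad_ext_apply[OF D yy \<sigma>'] on_D on_y by simp
qed

lemma sign_char_restrict_to: "x \<in> L \<Longrightarrow> sign_char x (restrict_to s L) = sign_char x s"
  by (simp add: sign_char_def restrict_to_def)

section \<open>The compositum of the dihedral and the cyclic extension\<close>

locale dihedral_cyclic_compositum =
  cyc: cyclic_quartic F C \<alpha> + dih: dihedral_biquadratic F D \<alpha> \<beta>
  for F C D :: "'a::field set" and \<alpha> \<beta> :: 'a
begin

abbreviation "\<gamma> \<equiv> cyc.\<gamma>"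

lemma quad_ext_alpha_subset_top: "quad_ext F \<alpha> \<subseteq> D"
  using quad_ext_subset[OF dih.subfield_top dih.base_subset dih.in_top(1)] .

lemma gamma_sq_in_top: "\<gamma> * \<gamma> \<in> D"
  using cyc.gamma_sq quad_ext_alpha_subset_top by blast

text \<open>Otherwise \<open>C \<subseteq> D\<close>, and restriction would give a homomorphism \<open>D \<rightarrow> C\<close>; its image lies
  in \<open>{0, 2}\<close>, i.e. in \<open>{id, \<rho>}\<close>, so all of \<open>Gal(D/F)\<close> would fix \<open>\<alpha>\<close>.\<close>
lemma gamma_notin_top: "\<gamma> \<notin> D"
proof
  assume "\<gamma> \<in> D"
  have "C \<subseteq> quad_ext (quad_ext F \<alpha>) \<gamma>" using cyc.eq_quad_ext_gamma by (rule equalityD1)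
  also have "\<dots> \<subseteq> D" using quad_ext_subset[OF dih.subfield_top quad_ext_alpha_subset_top \<open>\<gamma> \<in> D\<close>] .
  finally have CD: "C \<subseteq> D" .
  define R where "R = (\<lambda>s. restrict_to s C)"
  have R: "R \<in> hom (gal_group D F) (gal_group C F)"
    unfolding R_def using restrict_to_hom[OF cyc.galois cyc.finite_gal dih.subfield_top CD] .
  obtain \<phi> where \<phi>: "\<phi> \<in> iso (gal_group D F) dihedral8"
    using dih.gal_dihedral by (auto simp: is_iso_def)
  define \<phi>' where "\<phi>' = inv_into (carrier (gal_group D F)) \<phi>"
  have \<phi>': "\<phi>' \<in> iso dihedral8 (gal_group D F)"
    unfolding \<phi>'_def using group.iso_set_sym[OF group_gal_group[OF dih.subfield_top] \<phi>] .
  have h: "cyc.\<psi> \<circ> R \<circ> \<phi>' \<in> hom dihedral8 cyclic4"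
    using hom_compose[OF hom_compose[OF iso_imp_homomorphism[OF \<phi>'] R]
        iso_imp_homomorphism[OF cyc.psi_iso]] by (simp add: comp_assoc)
  have "s \<alpha> = \<alpha>" if s: "s \<in> carrier (gal_group D F)" for s
  proof -
    have "\<phi>' (\<phi> s) = s"
      using bij_betw_inv_into_left[of \<phi> "carrier (gal_group D F)" "carrier dihedral8" s] \<phi> s
      by (simp add: \<phi>'_def iso_def)
    then have "cyc.\<psi> (R s) \<in> {0, 2}"
      using hom_dihedral8_cyclic4_even[OF h hom_in_carrier[OF iso_imp_homomorphism[OF \<phi>] s]] by simp
    then have "R s = id \<or> R s = cyc.\<rho>"
      using cyc.rot_psi[OF hom_in_carrier[OF R s]] cyc.rot_zero by (auto simp: cyc.\<rho>_def)
    then have "R s \<alpha> = \<alpha>" using cyc.rho_alpha by auto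
    then show ?thesis using cyc.alpha_in by (simp add: R_def restrict_to_def)
  qed
  then have "\<alpha> \<in> fixed_field D F" using dih.in_top(1) by (simp add: fixed_field_def)
  then show False using dih.fixed_field_eq dih.notin_base(1) by simp
qed

lemma compositum_eq: "adjoin D C = quad_ext D \<gamma>"
proof (rule adjoin_eq_quad_ext[OF dih.subfield_top gamma_sq_in_top cyc.subfield_top cyc.gamma(1)])
  have "C \<subseteq> quad_ext (quad_ext F \<alpha>) \<gamma>" using cyc.eq_quad_ext_gamma by (rule equalityD1)
  also have "\<dots> \<subseteq> quad_ext D \<gamma>" using quad_ext_mono[OF quad_ext_alpha_subset_top] .
  finally show "C \<subseteq> quad_ext D \<gamma>" .
qed

lemma subfield_compositum: "is_subfield (quad_ext D \<gamma>)"
  using subfield_quad_ext[OF dih.subfield_top gamma_sq_in_top] .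

lemma top_subset_compositum: "D \<subseteq> quad_ext D \<gamma>"
  using subset_quad_ext[OF dih.subfield_top] .

lemma cyclic_subset_compositum: "C \<subseteq> quad_ext D \<gamma>"
  using compositum_eq adjoin_upper by blast

lemma gal_compositum_glue:
  assumes s: "s \<in> carrier (gal_group D F)" and t: "t \<in> carrier (gal_group C F)" and st: "s \<alpha> = t \<alpha>"
  obtains \<sigma> where "\<sigma> \<in> carrier (gal_group (quad_ext D \<gamma>) F)"
    "\<And>x. x \<in> D \<Longrightarrow> \<sigma> x = s x" "\<And>x. x \<in> C \<Longrightarrow> \<sigma> x = t x"
proof -
  have "s x = t x" if x: "x \<in> quad_ext F \<alpha>" for x
  proof -
    obtain u v where "u \<in> F" "v \<in> F" "x = u + v * \<alpha>" using x by (rule quad_extE)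
    then show "s x = t x"
      using gal_group_base_linear[OF dih.subfield_top dih.base_subset s dih.in_top(1)]
        gal_group_base_linear[OF cyc.subfield_top cyc.base_subset t cyc.alpha_in] st by simp
  qed
  then show thesis
    using gal_group_quad_ext_glue[OF dih.subfield_top cyc.subfield_quad_ext_alpha
        quad_ext_alpha_subset_top dih.base_subset gamma_notin_top cyc.gamma_sq cyc.eq_quad_ext_gamma s t]
      that by blast
qed

text \<open>\<open>\<gamma> \<mapsto> -\<gamma>\<close> forces the \<open>\<gamma>\<close>-coordinate of a fixed element to vanish; the extensions of
  all of \<open>Gal(D/F)\<close> then force its \<open>D\<close>-coordinate into \<open>F\<close>.\<close>
lemma fixed_field_compositum: "fixed_field (quad_ext D \<gamma>) F = F"
proof
  show "F \<subseteq> fixed_field (quad_ext D \<gamma>) F"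
    using dih.base_subset top_subset_compositum gal_group_fixes by (auto simp: fixed_field_def)
next
  show "fixed_field (quad_ext D \<gamma>) F \<subseteq> F"
  proof
    fix x assume "x \<in> fixed_field (quad_ext D \<gamma>) F"
    then have x: "x \<in> quad_ext D \<gamma>"
      and fixed: "\<And>\<sigma>. \<sigma> \<in> carrier (gal_group (quad_ext D \<gamma>) F) \<Longrightarrow> \<sigma> x = x"
      by (auto simp: fixed_field_def)
    obtain u v where uv: "u \<in> D" "v \<in> D" "x = u + v * \<gamma>" using x by (rule quad_extE)
    obtain \<sigma> where \<sigma>: "\<sigma> \<in> carrier (gal_group (quad_ext D \<gamma>) F)"
      "\<And>x. x \<in> D \<Longrightarrow> \<sigma> x = x" "\<And>x. x \<in> C \<Longrightarrow> \<sigma> x = cyc.\<rho> x"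
      using gal_compositum_glue[OF gal_group_id cyc.rho_gal] cyc.rho_alpha by (metis id_apply)
    have "u + v * \<gamma> = u + (- v) * \<gamma>"
      using fixed[OF \<sigma>(1)] gal_group_quad_ext_apply[OF dih.subfield_top gamma_sq_in_top \<sigma>(1) uv(1,2)]
        \<sigma>(2) uv \<sigma>(3)[OF cyc.gamma(1)] cyc.gamma(3) by simp
    then have "v = - v"
      using quad_ext_coords_unique[OF dih.subfield_top gamma_notin_top uv(1,2) uv(1)]
        subfield_uminus[OF dih.subfield_top uv(2)] by blast
    then have xD: "x = u" using uv neq_uminus_self[OF dih.two_neq_zero] by fastforce
    have "s x = x" if s: "s \<in> carrier (gal_group D F)" for s
    proof -
      define t where "t = (if s \<alpha> = \<alpha> then id else cyc.\<tau>)"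
      have t: "t \<in> carrier (gal_group C F)" by (simp add: t_def gal_group_id cyc.tau_gal)
      have "s \<alpha> = t \<alpha>"
        using gal_group_sqrt_cases[OF dih.subfield_top s dih.in_top(1) dih.squares(1)] cyc.tau_alpha
        by (auto simp: t_def)
      then obtain \<sigma> where "\<sigma> \<in> carrier (gal_group (quad_ext D \<gamma>) F)" "\<And>x. x \<in> D \<Longrightarrow> \<sigma> x = s x"
        using gal_compositum_glue[OF s t] by blast
      then show ?thesis using fixed xD uv(1) by metis
    qed
    then have "x \<in> fixed_field D F" using xD uv(1) by (simp add: fixed_field_def)
    then show "x \<in> F" using dih.fixed_field_eq by simp
  qed
qed

lemma ext_degree_compositum: "\<exists>n. ext_degree F (quad_ext D \<gamma>) n"
proof -
  obtain n where "ext_degree F D n" using dih.galois by (auto simp: galois_def)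
  then show ?thesis
    using ext_degree_quad_ext[OF dih.subfield_base dih.subfield_top dih.base_subset gamma_notin_top]
    by blast
qed

lemma galois_compositum: "galois F (quad_ext D \<gamma>)"
  unfolding galois_def
  using dih.subfield_base subfield_compositum dih.base_subset top_subset_compositum
    fixed_field_compositum ext_degree_compositum by blast

lemma restrict_to_top_hom: "(\<lambda>\<sigma>. restrict_to \<sigma> D) \<in> hom (gal_group (quad_ext D \<gamma>) F) (gal_group D F)"
  using restrict_to_hom[OF dih.galois dih.finite_gal subfield_compositum top_subset_compositum] .

lemma restrict_to_cyclic_hom: "(\<lambda>\<sigma>. restrict_to \<sigma> C) \<in> hom (gal_group (quad_ext D \<gamma>) F) (gal_group C F)"
  using restrict_to_hom[OF cyc.galois cyc.finite_gal subfield_compositum cyclic_subset_compositum] .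

context
  fixes \<phi> :: "('a \<Rightarrow> 'a) \<Rightarrow> int \<times> int"
  assumes \<phi>: "\<phi> \<in> iso (gal_group D F) dihedral8"
begin

definition \<Phi> :: "('a \<Rightarrow> 'a) \<Rightarrow> (int \<times> int) \<times> int" where
  "\<Phi> \<sigma> = (\<phi> (restrict_to \<sigma> D), cyc.\<psi> (restrict_to \<sigma> C))"

lemma Phi_inj: "inj_on \<Phi> (carrier (gal_group (quad_ext D \<gamma>) F))"
proof (rule inj_onI)
  fix \<sigma> \<sigma>' assume \<sigma>: "\<sigma> \<in> carrier (gal_group (quad_ext D \<gamma>) F)"
    and \<sigma>': "\<sigma>' \<in> carrier (gal_group (quad_ext D \<gamma>) F)" and eq: "\<Phi> \<sigma> = \<Phi> \<sigma>'"
  have "inj_on \<phi> (carrier (gal_group D F))" "inj_on cyc.\<psi> (carrier (gal_group C F))"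
    using \<phi> cyc.psi_iso by (simp_all add: iso_def bij_betw_def)
  then have "restrict_to \<sigma> D = restrict_to \<sigma>' D" "restrict_to \<sigma> C = restrict_to \<sigma>' C"
    using eq hom_in_carrier[OF restrict_to_top_hom] hom_in_carrier[OF restrict_to_cyclic_hom] \<sigma> \<sigma>'
    by (auto simp: \<Phi>_def dest: inj_onD)
  then show "\<sigma> = \<sigma>'"
    using gal_group_quad_ext_eqI[OF dih.subfield_top gamma_sq_in_top \<sigma> \<sigma>'] cyc.gamma(1)
    by (metis restrict_to_def)
qed

context
  assumes \<phi>_sign: "\<And>s. s \<in> carrier (gal_group D F) \<Longrightarrow> lambdaD (\<phi> s) = sign_char \<alpha> s"
begin

lemma Phi_hom: "\<Phi> \<in> hom (gal_group (quad_ext D \<gamma>) F) DwedgeC"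
proof (rule homI)
  fix \<sigma> assume \<sigma>: "\<sigma> \<in> carrier (gal_group (quad_ext D \<gamma>) F)"
  have D: "restrict_to \<sigma> D \<in> carrier (gal_group D F)" using hom_in_carrier[OF restrict_to_top_hom \<sigma>] .
  have C: "restrict_to \<sigma> C \<in> carrier (gal_group C F)" using hom_in_carrier[OF restrict_to_cyclic_hom \<sigma>] .
  show "\<Phi> \<sigma> \<in> carrier DwedgeC"
    using hom_in_carrier[OF iso_imp_homomorphism[OF \<phi>] D] hom_in_carrier[OF iso_imp_homomorphism[OF cyc.psi_iso] C]
      \<phi>_sign[OF D] cyc.etaC_psi[OF C] sign_char_restrict_to[OF dih.in_top(1)]
      sign_char_restrict_to[OF cyc.alpha_in]
    by (simp add: \<Phi>_def pullback_carrier)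
next
  fix \<sigma> \<sigma>' assume \<sigma>: "\<sigma> \<in> carrier (gal_group (quad_ext D \<gamma>) F)"
    and \<sigma>': "\<sigma>' \<in> carrier (gal_group (quad_ext D \<gamma>) F)"
  show "\<Phi> (\<sigma> \<otimes>\<^bsub>gal_group (quad_ext D \<gamma>) F\<^esub> \<sigma>') = \<Phi> \<sigma> \<otimes>\<^bsub>DwedgeC\<^esub> \<Phi> \<sigma>'"
    using hom_mult[OF restrict_to_top_hom \<sigma> \<sigma>'] hom_mult[OF restrict_to_cyclic_hom \<sigma> \<sigma>']
      hom_mult[OF iso_imp_homomorphism[OF \<phi>] hom_in_carrier[OF restrict_to_top_hom \<sigma>]
        hom_in_carrier[OF restrict_to_top_hom \<sigma>']]
      hom_mult[OF iso_imp_homomorphism[OF cyc.psi_iso] hom_in_carrier[OF restrict_to_cyclic_hom \<sigma>]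
        hom_in_carrier[OF restrict_to_cyclic_hom \<sigma>']]
    by (simp add: \<Phi>_def pullback_mult)
qed

lemma Phi_surj: "carrier DwedgeC \<subseteq> \<Phi> ` carrier (gal_group (quad_ext D \<gamma>) F)"
proof
  fix p assume "p \<in> carrier DwedgeC"
  then obtain u v where p: "p = (u, v)" and u: "u \<in> carrier dihedral8" and v: "v \<in> carrier cyclic4"
    and uv: "lambdaD u = etaC v"
    by (auto simp: pullback_carrier)
  define s where "s = inv_into (carrier (gal_group D F)) \<phi> u"
  have s: "s \<in> carrier (gal_group D F)" "\<phi> s = u"
    using \<phi> u by (auto simp: s_def iso_def bij_betw_def inv_into_into f_inv_into_f)
  have t: "cyc.rot v \<in> carrier (gal_group C F)" "cyc.\<psi> (cyc.rot v) = v"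
    using cyc.rot_closed[OF v] cyc.psi_rot[OF v] .
  have "s \<alpha> = cyc.rot v \<alpha>"
    using sign_char_eq_imp_eq[where s = s and t = "cyc.rot v", OF gal_group_sqrt_cases[OF dih.subfield_top s(1) dih.in_top(1) dih.squares(1)]
        gal_group_sqrt_cases[OF cyc.subfield_top t(1) cyc.alpha_in cyc.alpha_sq]]
      \<phi>_sign[OF s(1)] cyc.etaC_psi[OF t(1)] s(2) t(2) uv by simp
  then obtain \<sigma> where \<sigma>: "\<sigma> \<in> carrier (gal_group (quad_ext D \<gamma>) F)"
    "\<And>x. x \<in> D \<Longrightarrow> \<sigma> x = s x" "\<And>x. x \<in> C \<Longrightarrow> \<sigma> x = cyc.rot v x"
    using gal_compositum_glue[OF s(1) t(1)] by blast
  have "\<Phi> \<sigma> = p"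
    using restrict_to_eqI[OF s(1) \<sigma>(2)] restrict_to_eqI[OF t(1) \<sigma>(3)] s(2) t(2) p
    by (simp add: \<Phi>_def)
  then show "p \<in> \<Phi> ` carrier (gal_group (quad_ext D \<gamma>) F)" using \<sigma>(1) by blast
qed

lemma Phi_iso: "\<Phi> \<in> iso (gal_group (quad_ext D \<gamma>) F) DwedgeC"
  using Phi_hom Phi_inj Phi_surj hom_in_carrier[OF Phi_hom]
  by (auto simp: iso_def bij_betw_def)

end

end

lemma gal_compositum_iso: "gal_group (quad_ext D \<gamma>) F \<cong> DwedgeC"
proof -
  obtain \<phi> where \<phi>: "\<phi> \<in> iso (gal_group D F) dihedral8"
    and \<phi>_sign: "\<And>s. s \<in> carrier (gal_group D F) \<Longrightarrow> lambdaD (\<phi> s) = sign_char \<alpha> s"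
    using dih.iso_lambdaD_sign_char by blast
  show ?thesis using is_isoI[OF Phi_iso[OF \<phi> \<phi>_sign]] .
qed

end

theorem proposition3p1:
  fixes F Dab Ca :: "'a::alg_closed_field set" and a b \<alpha> \<beta> :: 'a
  assumes "is_subfield F"
    and "\<forall>x. algebraic_over F x"
    and "(2::'a) \<noteq> 0"
    and "a \<in> F" and "b \<in> F"
    and "\<alpha>\<^sup>2 = a" and "\<beta>\<^sup>2 = b"
    and "ext_degree F (adjoin F {\<alpha>, \<beta>}) 4"
    and "galois F Dab" and "adjoin F {\<alpha>, \<beta>} \<subseteq> Dab"
    and "gal_group Dab F \<cong> dihedral8"
    and "gal_group Dab (adjoin F {\<alpha> * \<beta>}) \<cong> cyclic4"
    and "galois F Ca" and "gal_group Ca F \<cong> cyclic4"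
    and "adjoin F {\<alpha>} \<subseteq> Ca"
  shows "galois F (adjoin Dab Ca) \<and> gal_group (adjoin Dab Ca) F \<cong> DwedgeC"
proof -
  have squares: "\<alpha> * \<alpha> \<in> F" "\<beta> * \<beta> \<in> F"
    using assms(4-7) by (simp_all add: power2_eq_square)
  note notin = sqrt_notin_of_ext_degree_four[OF assms(1) squares assms(8)]
  have "\<alpha> \<in> Ca" "\<alpha> \<in> Dab" "\<beta> \<in> Dab"
    using assms(10,15) adjoin_upper by blast+
  then interpret dihedral_cyclic_compositum F Ca Dab \<alpha> \<beta>
    using assms(3,9,11-14) squares notin by unfold_locales auto
  show ?thesis using galois_compositum gal_compositum_iso compositum_eq by simp
qed

end
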